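(* In the supersample construction described in the context, for every $i=1,\dots,n$, $$I(W;R_i\mid Z_i^\pm)\le I(W;Z_i),$$ where on the right-hand side $(W,Z_{[n]})$ has joint law $\xi^{\otimes n}\otimes P_{W|Z_{[n]}}$ (equivalently, $I(W;Z_i)=I(W;Z_i^{R_i})$ in the supersample construction).
   Context: Let $\xi$ be a distribution on a data space $\mathcal Z$ and $P_{W|Z_{[n]}}$ a Markov kernel from $\mathcal Z^n$ to a parameter space $\mathcal W$ (a learning algorithm); $Z_{[n]}=(Z_1,\dots,Z_n)$ denotes i.i.d. samples from $\xi$ with $W\sim P_{W|Z_{[n]}}$. Supersample construction: $Z_i^-,Z_i^+$ ($i=1,\dots,n$) are $2n$ i.i.d. samples from $\xi$, $Z_i^\pm=(Z_i^-,Z_i^+)$; $R_1,\dots,R_n$ are i.i.d. uniform on $\{-1,1\}$, independent of the samples; $W$ is the output of $P_{W|Z_{[n]}}$ on the training vector $(Z_1^{R_1},\dots,Z_n^{R_n})$, where $Z_i^{1}=Z_i^+$ and $Z_i^{-1}=Z_i^-$. *)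

theory Defs
  imports "HOL-Probability.Probability"
begin

definition KL_div :: "'a measure \<Rightarrow> 'a measure \<Rightarrow> ereal" where
  "KL_div P Q =
     (if absolutely_continuous Q P then
        (let f = (\<lambda>x. enn2real (RN_deriv Q P x)) in
          enn2ereal (\<integral>\<^sup>+ x. ennreal (ln (f x)) \<partial>P)
          - enn2ereal (\<integral>\<^sup>+ x. ennreal (- ln (f x)) \<partial>P))
      else \<infinity>)"

definition mutual_info ::
  "'o measure \<Rightarrow> 'a measure \<Rightarrow> 'b measure \<Rightarrow> ('o \<Rightarrow> 'a) \<Rightarrow> ('o \<Rightarrow> 'b) \<Rightarrow> ereal" where
  "mutual_info M MX MY X Y =
     KL_div (distr M (MX \<Otimes>\<^sub>M MY) (\<lambda>\<omega>. (X \<omega>, Y \<omega>)))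
            (distr M MX X \<Otimes>\<^sub>M distr M MY Y)"

text \<open>Conditional probability P(X \<in> A | Z = z), as the Radon-Nikodym derivative of
  C \<mapsto> P(X \<in> A, Z \<in> C) with respect to the law of Z.\<close>
definition cond_prob ::
  "'o measure \<Rightarrow> 'a measure \<Rightarrow> 'c measure \<Rightarrow> ('o \<Rightarrow> 'a) \<Rightarrow> ('o \<Rightarrow> 'c) \<Rightarrow> 'a set \<Rightarrow> 'c \<Rightarrow> ennreal" where
  "cond_prob M MX MZ X Z A =
     RN_deriv (distr M MZ Z)
              (distr (density M (indicator (X -` A \<inter> space M))) MZ Z)"

text \<open>The reference measure P_{X|Z} \<otimes> P_{Y|Z} \<otimes> P_Z on MX \<times> MY \<times> MZ (conditional
  product), characterised by its values on measurable rectangles.\<close>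
definition cond_product ::
  "'o measure \<Rightarrow> 'a measure \<Rightarrow> 'b measure \<Rightarrow> 'c measure \<Rightarrow>
   ('o \<Rightarrow> 'a) \<Rightarrow> ('o \<Rightarrow> 'b) \<Rightarrow> ('o \<Rightarrow> 'c) \<Rightarrow> ('a \<times> 'b \<times> 'c) measure" where
  "cond_product M MX MY MZ X Y Z =
     (THE Q. sets Q = sets (MX \<Otimes>\<^sub>M MY \<Otimes>\<^sub>M MZ) \<and>
        (\<forall>A\<in>sets MX. \<forall>B\<in>sets MY. \<forall>C\<in>sets MZ.
           emeasure Q (A \<times> B \<times> C) =
             (\<integral>\<^sup>+ z\<in>C. cond_prob M MX MZ X Z A z * cond_prob M MY MZ Y Z B z \<partial>(distr M MZ Z))))"

definition cond_mutual_info ::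
  "'o measure \<Rightarrow> 'a measure \<Rightarrow> 'b measure \<Rightarrow> 'c measure \<Rightarrow>
   ('o \<Rightarrow> 'a) \<Rightarrow> ('o \<Rightarrow> 'b) \<Rightarrow> ('o \<Rightarrow> 'c) \<Rightarrow> ereal" where
  "cond_mutual_info M MX MY MZ X Y Z =
     KL_div (distr M (MX \<Otimes>\<^sub>M MY \<Otimes>\<^sub>M MZ) (\<lambda>\<omega>. (X \<omega>, Y \<omega>, Z \<omega>)))
            (cond_product M MX MY MZ X Y Z)"

definition rademacher :: "int measure" where
  "rademacher = measure_pmf (pmf_of_set {-1, 1})"

definition select_train :: "nat \<Rightarrow> (nat \<Rightarrow> 'z) \<Rightarrow> (nat \<Rightarrow> 'z) \<Rightarrow> (nat \<Rightarrow> int) \<Rightarrow> nat \<Rightarrow> 'z" where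
  "select_train n zm zp r = (\<lambda>i\<in>{..<n}. if r i = 1 then zp i else zm i)"

text \<open>Joint law of (Z^-, Z^+, R) in the supersample construction.\<close>
definition supersample_base ::
  "nat \<Rightarrow> 'z measure \<Rightarrow> ((nat \<Rightarrow> 'z) \<times> (nat \<Rightarrow> 'z) \<times> (nat \<Rightarrow> int)) measure" where
  "supersample_base n \<xi> =
     PiM {..<n} (\<lambda>_. \<xi>) \<Otimes>\<^sub>M PiM {..<n} (\<lambda>_. \<xi>) \<Otimes>\<^sub>M PiM {..<n} (\<lambda>_. rademacher)"

definition supersample ::
  "nat \<Rightarrow> 'z measure \<Rightarrow> 'w measure \<Rightarrow> ((nat \<Rightarrow> 'z) \<Rightarrow> 'w measure) \<Rightarrow>
   (((nat \<Rightarrow> 'z) \<times> (nat \<Rightarrow> 'z) \<times> (nat \<Rightarrow> int)) \<times> 'w) measure" where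
  "supersample n \<xi> MW K =
     supersample_base n \<xi> \<bind>
       (\<lambda>s. distr (K (case s of (zm, zp, r) \<Rightarrow> select_train n zm zp r))
                   (supersample_base n \<xi> \<Otimes>\<^sub>M MW) (\<lambda>w. (s, w)))"

definition standard_law ::
  "nat \<Rightarrow> 'z measure \<Rightarrow> 'w measure \<Rightarrow> ((nat \<Rightarrow> 'z) \<Rightarrow> 'w measure) \<Rightarrow> ((nat \<Rightarrow> 'z) \<times> 'w) measure" where
  "standard_law n \<xi> MW K =
     PiM {..<n} (\<lambda>_. \<xi>) \<bind> (\<lambda>z. distr (K z) (PiM {..<n} (\<lambda>_. \<xi>) \<Otimes>\<^sub>M MW) (\<lambda>w. (z, w)))"

end

(*
  Let P be the joint law of (W, Z_i) and g its density with respect to P_W \<otimes> \<xi>. In the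
  supersample, (W, R_i, Z_i^-, Z_i^+) arises from (W, Z_i) ~ P by drawing a uniform sign R_i,
  putting Z_i into the slot selected by R_i and filling the other slot with an independent
  ghost sample from \<xi>. Hence, with respect to the reference law P_W \<otimes> unif {-1, 1} \<otimes> \<xi> \<otimes> \<xi>,
  the law L of (W, R_i, Z_i^-, Z_i^+) has density h (w, r, a, b) = g (w, if r = 1 then b else a),
  while the conditional product of W and R_i given (Z_i^-, Z_i^+) has density k, the average of
  h over the sign. So I(W; R_i | Z_i^-, Z_i^+) = E_L ln (h / k) and I(W; Z_i) = E_P ln g = E_L ln h,
  and their difference E_L ln (1 / k) is at most E_L (1 / k) - 1 <= 0: averaging h / k over the
  sign gives the indicator of k > 0, so E_L (1 / k) <= 1.
*)

theory Submission
  imports Defs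
begin

section \<open>Rademacher signs and selection of coordinates\<close>

lemma prob_space_rademacher: "prob_space rademacher"
  unfolding rademacher_def by (rule prob_space_measure_pmf)

lemma sets_rademacher [measurable_cong]: "sets rademacher = sets (count_space UNIV)"
  and space_rademacher [simp]: "space rademacher = UNIV"
  unfolding rademacher_def by simp_all

lemma measurable_rademacher: "measurable M rademacher = measurable M (count_space UNIV)"
  by (rule measurable_cong_sets[OF refl sets_rademacher])

lemma nn_integral_rademacher: "(\<integral>\<^sup>+ r. f r \<partial>rademacher) = (f 1 + f (-1)) / 2"
  unfolding rademacher_def by (subst nn_integral_pmf_of_set) (auto simp: add.commute)

lemma emeasure_rademacher: "emeasure rademacher B = (indicator B 1 + indicator B (-1)) / 2"
  using nn_integral_rademacher[of "indicator B"] by (simp add: sets_rademacher)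

lemma nn_integral_half_add:
  assumes "f \<in> borel_measurable M" "g \<in> borel_measurable M"
  shows "(\<integral>\<^sup>+x. (f x + g x) / 2 \<partial>M) = ((\<integral>\<^sup>+x. f x \<partial>M) + (\<integral>\<^sup>+x. g x \<partial>M)) / 2"
  using assms by (simp add: divide_ennreal_def nn_integral_multc nn_integral_add)

lemma ennreal_half_double: "((x::ennreal) + x) / 2 = x"
  by (simp add: mult_2[symmetric] mult.commute[of 2] ennreal_mult_divide_eq)

lemma nn_integral_rademacher_choice:
  assumes "prob_space M" and [measurable]: "h \<in> borel_measurable M"
  shows "(\<integral>\<^sup>+a. \<integral>\<^sup>+b. \<integral>\<^sup>+\<rho>. h (if \<rho> = 1 then b else a) \<partial>rademacher \<partial>M \<partial>M) = (\<integral>\<^sup>+x. h x \<partial>M)"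
proof -
  interpret prob_space M by fact
  have "(\<integral>\<^sup>+a. \<integral>\<^sup>+b. \<integral>\<^sup>+\<rho>. h (if \<rho> = 1 then b else a) \<partial>rademacher \<partial>M \<partial>M)
      = (\<integral>\<^sup>+a. \<integral>\<^sup>+b. (h b + h a) / 2 \<partial>M \<partial>M)"
    by (simp add: nn_integral_rademacher)
  also have "\<dots> = ((\<integral>\<^sup>+x. h x \<partial>M) + (\<integral>\<^sup>+x. h x \<partial>M)) / 2"
    by (simp add: nn_integral_half_add emeasure_space_1)
  finally show ?thesis
    by (simp add: ennreal_half_double)
qed

definition select_coords :: "'i set \<Rightarrow> ('i \<Rightarrow> 'z) \<Rightarrow> ('i \<Rightarrow> 'z) \<Rightarrow> ('i \<Rightarrow> int) \<Rightarrow> 'i \<Rightarrow> 'z" where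
  "select_coords J zm zp r = (\<lambda>j\<in>J. if r j = 1 then zp j else zm j)"

lemma select_train_eq_select_coords: "select_train n = select_coords {..<n}"
  by (simp add: fun_eq_iff select_train_def select_coords_def)

lemma select_coords_insert:
  "j \<notin> J \<Longrightarrow> select_coords (insert j J) (zm(j := a)) (zp(j := b)) (r(j := \<rho>))
     = (select_coords J zm zp r)(j := (if \<rho> = 1 then b else a))"
  by (auto simp: select_coords_def fun_eq_iff)

lemma measurable_select_coords [measurable]:
  assumes [measurable]: "f \<in> N \<rightarrow>\<^sub>M PiM J (\<lambda>_. M)" "g \<in> N \<rightarrow>\<^sub>M PiM J (\<lambda>_. M)"
    "r \<in> N \<rightarrow>\<^sub>M PiM J (\<lambda>_. rademacher)"
  shows "(\<lambda>x. select_coords J (f x) (g x) (r x)) \<in> N \<rightarrow>\<^sub>M PiM J (\<lambda>_. M)"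
  unfolding select_coords_def
proof (rule measurable_restrict)
  fix j assume [measurable]: "j \<in> J"
  have "(\<lambda>x. r x j) \<in> N \<rightarrow>\<^sub>M rademacher" by measurable
  then have [measurable]: "(\<lambda>x. r x j) \<in> N \<rightarrow>\<^sub>M count_space UNIV"
    by (simp only: measurable_rademacher)
  have [measurable]: "(\<lambda>x. f x j) \<in> N \<rightarrow>\<^sub>M M" by measurable
  have [measurable]: "(\<lambda>x. g x j) \<in> N \<rightarrow>\<^sub>M M" by measurable
  show "(\<lambda>x. if r x j = 1 then g x j else f x j) \<in> N \<rightarrow>\<^sub>M M"
    by measurable
qed

lemma nn_integral_PiM_triple_insert:
  fixes M :: "'a measure" and N :: "'b measure"
  assumes "sigma_finite_measure M" "sigma_finite_measure N" "finite J" "i \<notin> J"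
    and [measurable]: "F \<in> borel_measurable
      (PiM (insert i J) (\<lambda>_. M) \<Otimes>\<^sub>M PiM (insert i J) (\<lambda>_. M) \<Otimes>\<^sub>M PiM (insert i J) (\<lambda>_. N))"
  shows "(\<integral>\<^sup>+x. \<integral>\<^sup>+y. \<integral>\<^sup>+r. F (x, y, r)
            \<partial>PiM (insert i J) (\<lambda>_. N) \<partial>PiM (insert i J) (\<lambda>_. M) \<partial>PiM (insert i J) (\<lambda>_. M))
    = (\<integral>\<^sup>+x. \<integral>\<^sup>+y. \<integral>\<^sup>+r. \<integral>\<^sup>+a. \<integral>\<^sup>+b. \<integral>\<^sup>+\<rho>. F (x(i := a), y(i := b), r(i := \<rho>))
            \<partial>N \<partial>M \<partial>M \<partial>PiM J (\<lambda>_. N) \<partial>PiM J (\<lambda>_. M) \<partial>PiM J (\<lambda>_. M))"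
proof -
  interpret M: product_sigma_finite "\<lambda>_. M"
    using assms(1) by (simp add: product_sigma_finite_def)
  interpret N: product_sigma_finite "\<lambda>_. N"
    using assms(2) by (simp add: product_sigma_finite_def)
  let ?M = "PiM J (\<lambda>_. M)" and ?N = "PiM J (\<lambda>_. N)"
    and ?iM = "PiM (insert i J) (\<lambda>_. M)" and ?iN = "PiM (insert i J) (\<lambda>_. N)"
  interpret MJ: sigma_finite_measure ?M using \<open>finite J\<close> by (rule M.sigma_finite)
  interpret NJ: sigma_finite_measure ?N using \<open>finite J\<close> by (rule N.sigma_finite)
  interpret iMJ: sigma_finite_measure ?iM using \<open>finite J\<close> by (intro M.sigma_finite) simp
  interpret iNJ: sigma_finite_measure ?iN using \<open>finite J\<close> by (intro N.sigma_finite) simp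
  interpret MJ_M: pair_sigma_finite ?M M using assms(1) by unfold_locales
  interpret NJ_M: pair_sigma_finite ?N M using assms(1) by unfold_locales
  have upd_space [measurable]: "x(i := a) \<in> space (PiM (insert i J) (\<lambda>_. L))"
    if "x \<in> space (PiM J (\<lambda>_. L))" "a \<in> space L" for x a and L :: "'c measure"
    using that by (auto simp: space_PiM PiE_def extensional_def)
  have "(\<integral>\<^sup>+x. \<integral>\<^sup>+y. \<integral>\<^sup>+r. F (x, y, r) \<partial>?iN \<partial>?iM \<partial>?iM)
     = (\<integral>\<^sup>+x. \<integral>\<^sup>+a. \<integral>\<^sup>+y. \<integral>\<^sup>+r. F (x(i := a), y, r) \<partial>?iN \<partial>?iM \<partial>M \<partial>?M)"
    using \<open>finite J\<close> \<open>i \<notin> J\<close> by (rule M.product_nn_integral_insert) measurable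
  also have "\<dots> = (\<integral>\<^sup>+x. \<integral>\<^sup>+a. \<integral>\<^sup>+y. \<integral>\<^sup>+b. \<integral>\<^sup>+r. F (x(i := a), y(i := b), r) \<partial>?iN \<partial>M \<partial>?M \<partial>M \<partial>?M)"
  proof (intro nn_integral_cong)
    fix x a assume [measurable]: "x \<in> space ?M" "a \<in> space M"
    show "(\<integral>\<^sup>+y. \<integral>\<^sup>+r. F (x(i := a), y, r) \<partial>?iN \<partial>?iM)
        = (\<integral>\<^sup>+y. \<integral>\<^sup>+b. \<integral>\<^sup>+r. F (x(i := a), y(i := b), r) \<partial>?iN \<partial>M \<partial>?M)"
      using \<open>finite J\<close> \<open>i \<notin> J\<close> by (rule M.product_nn_integral_insert) measurable
  qed
  also have "\<dots> = (\<integral>\<^sup>+x. \<integral>\<^sup>+a. \<integral>\<^sup>+y. \<integral>\<^sup>+b. \<integral>\<^sup>+r. \<integral>\<^sup>+\<rho>. F (x(i := a), y(i := b), r(i := \<rho>))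
            \<partial>N \<partial>?N \<partial>M \<partial>?M \<partial>M \<partial>?M)"
  proof (intro nn_integral_cong)
    fix x a y b assume [measurable]: "x \<in> space ?M" "a \<in> space M" "y \<in> space ?M" "b \<in> space M"
    show "(\<integral>\<^sup>+r. F (x(i := a), y(i := b), r) \<partial>?iN)
        = (\<integral>\<^sup>+r. \<integral>\<^sup>+\<rho>. F (x(i := a), y(i := b), r(i := \<rho>)) \<partial>N \<partial>?N)"
      using \<open>finite J\<close> \<open>i \<notin> J\<close> by (rule N.product_nn_integral_insert) measurable
  qed
  also have "\<dots> = (\<integral>\<^sup>+x. \<integral>\<^sup>+y. \<integral>\<^sup>+r. \<integral>\<^sup>+a. \<integral>\<^sup>+b. \<integral>\<^sup>+\<rho>. F (x(i := a), y(i := b), r(i := \<rho>))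
            \<partial>N \<partial>M \<partial>M \<partial>?N \<partial>?M \<partial>?M)"
  proof (intro nn_integral_cong)
    fix x assume [measurable]: "x \<in> space ?M"
    have "(\<integral>\<^sup>+a. \<integral>\<^sup>+y. \<integral>\<^sup>+b. \<integral>\<^sup>+r. \<integral>\<^sup>+\<rho>. F (x(i := a), y(i := b), r(i := \<rho>)) \<partial>N \<partial>?N \<partial>M \<partial>?M \<partial>M)
        = (\<integral>\<^sup>+y. \<integral>\<^sup>+a. \<integral>\<^sup>+b. \<integral>\<^sup>+r. \<integral>\<^sup>+\<rho>. F (x(i := a), y(i := b), r(i := \<rho>)) \<partial>N \<partial>?N \<partial>M \<partial>M \<partial>?M)"
      by (rule MJ_M.Fubini') measurable
    also have "\<dots> = (\<integral>\<^sup>+y. \<integral>\<^sup>+a. \<integral>\<^sup>+r. \<integral>\<^sup>+b. \<integral>\<^sup>+\<rho>. F (x(i := a), y(i := b), r(i := \<rho>)) \<partial>N \<partial>M \<partial>?N \<partial>M \<partial>?M)"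
      by (intro nn_integral_cong NJ_M.Fubini') measurable
    also have "\<dots> = (\<integral>\<^sup>+y. \<integral>\<^sup>+r. \<integral>\<^sup>+a. \<integral>\<^sup>+b. \<integral>\<^sup>+\<rho>. F (x(i := a), y(i := b), r(i := \<rho>)) \<partial>N \<partial>M \<partial>M \<partial>?N \<partial>?M)"
      by (intro nn_integral_cong NJ_M.Fubini') measurable
    finally show "(\<integral>\<^sup>+a. \<integral>\<^sup>+y. \<integral>\<^sup>+b. \<integral>\<^sup>+r. \<integral>\<^sup>+\<rho>. F (x(i := a), y(i := b), r(i := \<rho>)) \<partial>N \<partial>?N \<partial>M \<partial>?M \<partial>M)
        = \<dots>" .
  qed
  finally show ?thesis .
qed

lemma nn_integral_select_coords:
  assumes M: "prob_space M" and "finite J" and "f \<in> borel_measurable (PiM J (\<lambda>_. M))"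
  shows "(\<integral>\<^sup>+x. \<integral>\<^sup>+y. \<integral>\<^sup>+r. f (select_coords J x y r)
            \<partial>PiM J (\<lambda>_. rademacher) \<partial>PiM J (\<lambda>_. M) \<partial>PiM J (\<lambda>_. M))
    = (\<integral>\<^sup>+x. f x \<partial>PiM J (\<lambda>_. M))"
  using \<open>finite J\<close> \<open>f \<in> borel_measurable (PiM J (\<lambda>_. M))\<close>
proof (induction J arbitrary: f rule: finite_induct)
  case empty
  interpret R: prob_space "PiM {} (\<lambda>_. rademacher)"
    by (intro prob_space_PiM prob_space_rademacher)
  interpret M: prob_space "PiM {} (\<lambda>_. M)"
    by (intro prob_space_PiM M)
  show ?case
    by (simp add: PiM_empty nn_integral_count_space_finite select_coords_def)
next
  case (insert j J)
  note [measurable] = insert.prems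
  interpret M: prob_space M by fact
  interpret R: prob_space rademacher by (rule prob_space_rademacher)
  interpret MP: product_sigma_finite "\<lambda>_. M" by unfold_locales
  interpret RP: product_sigma_finite "\<lambda>_. rademacher" by unfold_locales
  let ?M = "PiM J (\<lambda>_. M)" and ?R = "PiM J (\<lambda>_. rademacher)"
  interpret MJ: prob_space ?M by (intro prob_space_PiM M)
  interpret RJ: prob_space ?R by (intro prob_space_PiM prob_space_rademacher)
  have "(\<integral>\<^sup>+x. \<integral>\<^sup>+y. \<integral>\<^sup>+r. f (select_coords (insert j J) x y r)
            \<partial>PiM (insert j J) (\<lambda>_. rademacher) \<partial>PiM (insert j J) (\<lambda>_. M) \<partial>PiM (insert j J) (\<lambda>_. M))
     = (\<integral>\<^sup>+x. \<integral>\<^sup>+y. \<integral>\<^sup>+r. \<integral>\<^sup>+a. \<integral>\<^sup>+b. \<integral>\<^sup>+\<rho>.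
          f (select_coords (insert j J) (x(j := a)) (y(j := b)) (r(j := \<rho>)))
            \<partial>rademacher \<partial>M \<partial>M \<partial>?R \<partial>?M \<partial>?M)"
  proof -
    have "(\<lambda>(x, y, r). f (select_coords (insert j J) x y r)) \<in> borel_measurable
      (PiM (insert j J) (\<lambda>_. M) \<Otimes>\<^sub>M PiM (insert j J) (\<lambda>_. M) \<Otimes>\<^sub>M PiM (insert j J) (\<lambda>_. rademacher))"
      by measurable
    from nn_integral_PiM_triple_insert[OF _ _ insert.hyps this] show ?thesis
      by (simp add: M.sigma_finite_measure_axioms R.sigma_finite_measure_axioms)
  qed
  also have "\<dots> = (\<integral>\<^sup>+x. \<integral>\<^sup>+y. \<integral>\<^sup>+r. (\<lambda>X. \<integral>\<^sup>+a. f (X(j := a)) \<partial>M) (select_coords J x y r)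
            \<partial>?R \<partial>?M \<partial>?M)"
  proof (rule nn_integral_cong, rule nn_integral_cong, rule nn_integral_cong)
    fix x y r assume [measurable]: "x \<in> space ?M" "y \<in> space ?M" "r \<in> space ?R"
    have f_upd: "(\<lambda>a. f ((select_coords J x y r)(j := a))) \<in> borel_measurable M"
      by measurable
    show "(\<integral>\<^sup>+a. \<integral>\<^sup>+b. \<integral>\<^sup>+\<rho>. f (select_coords (insert j J) (x(j := a)) (y(j := b)) (r(j := \<rho>)))
            \<partial>rademacher \<partial>M \<partial>M) = (\<integral>\<^sup>+a. f ((select_coords J x y r)(j := a)) \<partial>M)"
      using nn_integral_rademacher_choice[OF M f_upd] insert.hyps by (simp add: select_coords_insert)
  qed
  also have "\<dots> = (\<integral>\<^sup>+X. \<integral>\<^sup>+a. f (X(j := a)) \<partial>M \<partial>?M)"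
    by (rule insert.IH) (use measurable_add_dim[of j J "\<lambda>_. M"] in measurable)
  also have "\<dots> = (\<integral>\<^sup>+x. f x \<partial>PiM (insert j J) (\<lambda>_. M))"
    using insert.hyps by (intro MP.product_nn_integral_insert[symmetric]) measurable
  finally show ?case .
qed

lemma measurable_kernel_Pair [measurable]:
  assumes [measurable]: "K \<in> M \<rightarrow>\<^sub>M prob_algebra N"
  shows "(\<lambda>x. distr (K x) (M \<Otimes>\<^sub>M N) (\<lambda>y. (x, y))) \<in> M \<rightarrow>\<^sub>M prob_algebra (M \<Otimes>\<^sub>M N)"
  by measurable

lemma
  assumes "prob_space M" and "K \<in> M \<rightarrow>\<^sub>M prob_algebra N"
  shows prob_space_bind_kernel_Pair: "prob_space (M \<bind> (\<lambda>x. distr (K x) (M \<Otimes>\<^sub>M N) (\<lambda>y. (x, y))))"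
    and sets_bind_kernel_Pair: "sets (M \<bind> (\<lambda>x. distr (K x) (M \<Otimes>\<^sub>M N) (\<lambda>y. (x, y)))) = sets (M \<Otimes>\<^sub>M N)"
proof -
  have M: "M \<in> space (prob_algebra M)"
    using \<open>prob_space M\<close> by (simp add: space_prob_algebra)
  show "prob_space (M \<bind> (\<lambda>x. distr (K x) (M \<Otimes>\<^sub>M N) (\<lambda>y. (x, y))))"
    by (rule prob_space_bind'[OF M measurable_kernel_Pair[OF assms(2)]])
  show "sets (M \<bind> (\<lambda>x. distr (K x) (M \<Otimes>\<^sub>M N) (\<lambda>y. (x, y)))) = sets (M \<Otimes>\<^sub>M N)"
    by (rule sets_bind'[OF M measurable_kernel_Pair[OF assms(2)]])
qed

lemma nn_integral_bind_kernel_Pair: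
  assumes K: "K \<in> M \<rightarrow>\<^sub>M prob_algebra N" and f: "f \<in> borel_measurable (M \<Otimes>\<^sub>M N)"
  shows "(\<integral>\<^sup>+z. f z \<partial>(M \<bind> (\<lambda>x. distr (K x) (M \<Otimes>\<^sub>M N) (\<lambda>y. (x, y)))))
    = (\<integral>\<^sup>+x. \<integral>\<^sup>+y. f (x, y) \<partial>K x \<partial>M)"
proof (subst nn_integral_bind[OF f measurable_prob_algebraD[OF measurable_kernel_Pair[OF K]]],
    rule nn_integral_cong)
  fix x assume x: "x \<in> space M"
  have "sets (K x) = sets N"
    using measurable_space[OF K x] by (simp add: space_prob_algebra)
  then have "(\<lambda>y. (x, y)) \<in> K x \<rightarrow>\<^sub>M M \<Otimes>\<^sub>M N"
    using measurable_Pair1'[OF x, of N] by (simp cong: measurable_cong_sets)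
  then show "(\<integral>\<^sup>+z. f z \<partial>distr (K x) (M \<Otimes>\<^sub>M N) (\<lambda>y. (x, y))) = (\<integral>\<^sup>+y. f (x, y) \<partial>K x)"
    using f by (simp add: nn_integral_distr)
qed

lemma prob_space_supersample_base: "prob_space \<xi> \<Longrightarrow> prob_space (supersample_base n \<xi>)"
  unfolding supersample_base_def
  by (intro prob_space_pair prob_space_PiM prob_space_rademacher)

lemma measurable_train_kernel [measurable]:
  assumes [measurable]: "K \<in> PiM {..<n} (\<lambda>_. \<xi>) \<rightarrow>\<^sub>M prob_algebra MW"
  shows "(\<lambda>s. K (case s of (zm, zp, r) \<Rightarrow> select_train n zm zp r))
    \<in> supersample_base n \<xi> \<rightarrow>\<^sub>M prob_algebra MW"
  unfolding supersample_base_def select_train_eq_select_coords by measurable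

lemma
  assumes "prob_space \<xi>" and "K \<in> PiM {..<n} (\<lambda>_. \<xi>) \<rightarrow>\<^sub>M prob_algebra MW"
  shows prob_space_supersample: "prob_space (supersample n \<xi> MW K)"
    and sets_supersample: "sets (supersample n \<xi> MW K) = sets (supersample_base n \<xi> \<Otimes>\<^sub>M MW)"
  unfolding supersample_def
  by (intro prob_space_bind_kernel_Pair sets_bind_kernel_Pair prob_space_supersample_base
      measurable_train_kernel assms)+

lemma
  assumes "prob_space \<xi>" and "K \<in> PiM {..<n} (\<lambda>_. \<xi>) \<rightarrow>\<^sub>M prob_algebra MW"
  shows prob_space_standard_law: "prob_space (standard_law n \<xi> MW K)"
    and sets_standard_law: "sets (standard_law n \<xi> MW K) = sets (PiM {..<n} (\<lambda>_. \<xi>) \<Otimes>\<^sub>M MW)"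
  unfolding standard_law_def
  by (intro prob_space_bind_kernel_Pair sets_bind_kernel_Pair prob_space_PiM assms)+

lemma nn_integral_standard_law:
  "K \<in> PiM {..<n} (\<lambda>_. \<xi>) \<rightarrow>\<^sub>M prob_algebra MW \<Longrightarrow>
   f \<in> borel_measurable (PiM {..<n} (\<lambda>_. \<xi>) \<Otimes>\<^sub>M MW) \<Longrightarrow>
   (\<integral>\<^sup>+x. f x \<partial>standard_law n \<xi> MW K) = (\<integral>\<^sup>+z. \<integral>\<^sup>+w. f (z, w) \<partial>K z \<partial>PiM {..<n} (\<lambda>_. \<xi>))"
  unfolding standard_law_def by (rule nn_integral_bind_kernel_Pair)

lemma nn_integral_supersample:
  assumes "prob_space \<xi>" and K [measurable]: "K \<in> PiM {..<n} (\<lambda>_. \<xi>) \<rightarrow>\<^sub>M prob_algebra MW"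
    and f [measurable]: "f \<in> borel_measurable (supersample_base n \<xi> \<Otimes>\<^sub>M MW)"
  shows "(\<integral>\<^sup>+x. f x \<partial>supersample n \<xi> MW K) =
    (\<integral>\<^sup>+zm. \<integral>\<^sup>+zp. \<integral>\<^sup>+r. \<integral>\<^sup>+w. f ((zm, zp, r), w) \<partial>K (select_train n zm zp r)
        \<partial>PiM {..<n} (\<lambda>_. rademacher) \<partial>PiM {..<n} (\<lambda>_. \<xi>) \<partial>PiM {..<n} (\<lambda>_. \<xi>))"
proof -
  let ?Z = "PiM {..<n} (\<lambda>_. \<xi>)" and ?R = "PiM {..<n} (\<lambda>_. rademacher)"
  interpret Z: prob_space ?Z by (intro prob_space_PiM \<open>prob_space \<xi>\<close>)
  interpret R: prob_space ?R by (intro prob_space_PiM prob_space_rademacher)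
  interpret ZR: prob_space "?Z \<Otimes>\<^sub>M ?R" by (intro prob_space_pair Z.prob_space_axioms R.prob_space_axioms)
  define G where "G s = (\<integral>\<^sup>+w. f (s, w) \<partial>K (case s of (zm, zp, r) \<Rightarrow> select_train n zm zp r))" for s
  have [measurable]: "G \<in> borel_measurable (supersample_base n \<xi>)"
    unfolding G_def
    by (rule nn_integral_measurable_subprob_algebra2[OF _ measurable_prob_algebraD[OF measurable_train_kernel[OF K]]]) measurable
  then have G [measurable]: "G \<in> borel_measurable (?Z \<Otimes>\<^sub>M ?Z \<Otimes>\<^sub>M ?R)"
    by (simp add: supersample_base_def)
  have "(\<integral>\<^sup>+x. f x \<partial>supersample n \<xi> MW K) = (\<integral>\<^sup>+s. G s \<partial>supersample_base n \<xi>)"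
    unfolding supersample_def G_def by (rule nn_integral_bind_kernel_Pair[OF measurable_train_kernel[OF K] f])
  also have "\<dots> = (\<integral>\<^sup>+zm. \<integral>\<^sup>+zr. G (zm, zr) \<partial>(?Z \<Otimes>\<^sub>M ?R) \<partial>?Z)"
    unfolding supersample_base_def by (rule ZR.nn_integral_fst[symmetric]) measurable
  also have "\<dots> = (\<integral>\<^sup>+zm. \<integral>\<^sup>+zp. \<integral>\<^sup>+r. G (zm, zp, r) \<partial>?R \<partial>?Z \<partial>?Z)"
    by (intro nn_integral_cong R.nn_integral_fst[symmetric]) measurable
  finally show ?thesis
    by (simp add: G_def)
qed

lemma distr_standard_law_coord:
  assumes "prob_space \<xi>" and K [measurable]: "K \<in> PiM {..<n} (\<lambda>_. \<xi>) \<rightarrow>\<^sub>M prob_algebra MW" and "i < n"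
  shows "distr (standard_law n \<xi> MW K) \<xi> (\<lambda>\<omega>. fst \<omega> i) = \<xi>"
proof (rule measure_eqI)
  fix A assume "A \<in> sets (distr (standard_law n \<xi> MW K) \<xi> (\<lambda>\<omega>. fst \<omega> i))"
  then have [measurable]: "A \<in> sets \<xi>" by simp
  have [measurable]: "i \<in> {..<n}" using \<open>i < n\<close> by simp
  note [measurable_cong] = sets_standard_law[OF assms(1,2)]
  have "emeasure (distr (standard_law n \<xi> MW K) \<xi> (\<lambda>\<omega>. fst \<omega> i)) A
      = (\<integral>\<^sup>+\<omega>. indicator A (fst \<omega> i) \<partial>standard_law n \<xi> MW K)"
    by (subst nn_integral_indicator[symmetric], simp) (rule nn_integral_distr, measurable)
  also have "\<dots> = (\<integral>\<^sup>+z. \<integral>\<^sup>+w. indicator A (z i) \<partial>K z \<partial>PiM {..<n} (\<lambda>_. \<xi>))"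
    by (subst nn_integral_standard_law[OF K]) (simp_all, measurable)
  also have "\<dots> = (\<integral>\<^sup>+z. indicator A (z i) \<partial>PiM {..<n} (\<lambda>_. \<xi>))"
  proof (rule nn_integral_cong)
    fix z assume "z \<in> space (PiM {..<n} (\<lambda>_. \<xi>))"
    then have "prob_space (K z)"
      using measurable_space[OF K] by (simp add: space_prob_algebra)
    then show "(\<integral>\<^sup>+w. indicator A (z i) \<partial>K z) = indicator A (z i)"
      by (simp add: prob_space.emeasure_space_1)
  qed
  also have "\<dots> = emeasure (distr (PiM {..<n} (\<lambda>_. \<xi>)) \<xi> (\<lambda>z. z i)) A"
    by (subst nn_integral_indicator[symmetric], simp) (rule nn_integral_distr[symmetric], measurable)
  finally show "emeasure (distr (standard_law n \<xi> MW K) \<xi> (\<lambda>\<omega>. fst \<omega> i)) A = emeasure \<xi> A"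
    using distr_PiM_component[of "{..<n}" "\<lambda>_. \<xi>" i] \<open>prob_space \<xi>\<close> \<open>i < n\<close> by simp
qed simp

section \<open>Ghost averages\<close>

(* The conditional expectation of f (W, R, Z^-, Z^+) given W = w and Z^R = y, when the sign R is
   uniform and the other slot holds an independent ghost sample from xi. *)
definition ghost_average :: "'z measure \<Rightarrow> ('w \<times> int \<times> 'z \<times> 'z \<Rightarrow> ennreal) \<Rightarrow> 'w \<Rightarrow> 'z \<Rightarrow> ennreal" where
  "ghost_average \<xi> f w y = ((\<integral>\<^sup>+a. f (w, 1, a, y) \<partial>\<xi>) + (\<integral>\<^sup>+a. f (w, -1, y, a) \<partial>\<xi>)) / 2"

lemma measurable_ghost_average:
  assumes "sigma_finite_measure \<xi>"
    and [measurable]: "f \<in> borel_measurable (MW \<Otimes>\<^sub>M (count_space UNIV \<Otimes>\<^sub>M (\<xi> \<Otimes>\<^sub>M \<xi>)))"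
  shows "(\<lambda>(w, y). ghost_average \<xi> f w y) \<in> borel_measurable (MW \<Otimes>\<^sub>M \<xi>)"
proof -
  interpret sigma_finite_measure \<xi> by fact
  show ?thesis unfolding ghost_average_def by measurable
qed

lemma Fubini_sets_cong:
  assumes "sigma_finite_measure M" "sigma_finite_measure N" "sets N = sets N'"
    and "(\<lambda>(x, y). g x y) \<in> borel_measurable (M \<Otimes>\<^sub>M N')"
  shows "(\<integral>\<^sup>+x. \<integral>\<^sup>+y. g x y \<partial>N \<partial>M) = (\<integral>\<^sup>+y. \<integral>\<^sup>+x. g x y \<partial>M \<partial>N)"
proof -
  interpret pair_sigma_finite M N
    using assms(1,2) by (rule pair_sigma_finite.intro)
  have "(\<lambda>(x, y). g x y) \<in> borel_measurable (M \<Otimes>\<^sub>M N)"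
    using assms(4) by (simp add: measurable_cong_sets[OF sets_pair_measure_cong[OF refl assms(3)] refl])
  from Fubini[OF this] show ?thesis by simp
qed

lemma nn_integral_ghost_average:
  assumes "prob_space \<xi>" and L [measurable]: "L \<in> \<xi> \<rightarrow>\<^sub>M prob_algebra MW"
    and f [measurable]: "f \<in> borel_measurable (MW \<Otimes>\<^sub>M (count_space UNIV \<Otimes>\<^sub>M (\<xi> \<Otimes>\<^sub>M \<xi>)))"
  shows "(\<integral>\<^sup>+a. \<integral>\<^sup>+b. \<integral>\<^sup>+\<rho>. \<integral>\<^sup>+w. f (w, \<rho>, a, b) \<partial>L (if \<rho> = 1 then b else a) \<partial>rademacher \<partial>\<xi> \<partial>\<xi>)
    = (\<integral>\<^sup>+y. \<integral>\<^sup>+w. ghost_average \<xi> f w y \<partial>L y \<partial>\<xi>)"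
proof -
  interpret xi: prob_space \<xi> by fact
  interpret xi_xi: pair_sigma_finite \<xi> \<xi> ..
  have [measurable]: "L \<in> \<xi> \<rightarrow>\<^sub>M subprob_algebra MW"
    by (rule measurable_prob_algebraD[OF L])
  have L_y: "prob_space (L y)" "sets (L y) = sets MW" if "y \<in> space \<xi>" for y
    using measurable_space[OF L that] by (auto simp: space_prob_algebra)
  have swap: "(\<integral>\<^sup>+a. \<integral>\<^sup>+w. g a w \<partial>L y \<partial>\<xi>) = (\<integral>\<^sup>+w. \<integral>\<^sup>+a. g a w \<partial>\<xi> \<partial>L y)"
    if "y \<in> space \<xi>" and "(\<lambda>(a, w). g a w) \<in> borel_measurable (\<xi> \<Otimes>\<^sub>M MW)" for g y
    using L_y[OF \<open>y \<in> space \<xi>\<close>] that(2)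
    by (intro Fubini_sets_cong xi.sigma_finite_measure_axioms prob_space_imp_sigma_finite)
  have [measurable]: "(\<lambda>x. \<integral>\<^sup>+w. f (w, \<rho>, fst x, snd x) \<partial>L (snd x)) \<in> borel_measurable (\<xi> \<Otimes>\<^sub>M \<xi>)"
    "(\<lambda>x. \<integral>\<^sup>+w. f (w, \<rho>, fst x, snd x) \<partial>L (fst x)) \<in> borel_measurable (\<xi> \<Otimes>\<^sub>M \<xi>)" for \<rho>
    by (rule nn_integral_measurable_subprob_algebra2[where N = MW]; measurable)+
  define I where "I y = (\<integral>\<^sup>+w. \<integral>\<^sup>+a. f (w, 1, a, y) \<partial>\<xi> \<partial>L y)" for y
  define I' where "I' y = (\<integral>\<^sup>+w. \<integral>\<^sup>+a. f (w, -1, y, a) \<partial>\<xi> \<partial>L y)" for y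
  have [measurable]: "I \<in> borel_measurable \<xi>" "I' \<in> borel_measurable \<xi>"
    unfolding I_def I'_def by (rule nn_integral_measurable_subprob_algebra2[where N = MW]; measurable)+
  have "(\<integral>\<^sup>+a. \<integral>\<^sup>+b. \<integral>\<^sup>+\<rho>. \<integral>\<^sup>+w. f (w, \<rho>, a, b) \<partial>L (if \<rho> = 1 then b else a) \<partial>rademacher \<partial>\<xi> \<partial>\<xi>)
      = (\<integral>\<^sup>+a. \<integral>\<^sup>+b. ((\<integral>\<^sup>+w. f (w, 1, a, b) \<partial>L b) + (\<integral>\<^sup>+w. f (w, -1, a, b) \<partial>L a)) / 2 \<partial>\<xi> \<partial>\<xi>)"
    by (simp add: nn_integral_rademacher)
  also have "\<dots> = (\<integral>\<^sup>+a. ((\<integral>\<^sup>+b. \<integral>\<^sup>+w. f (w, 1, a, b) \<partial>L b \<partial>\<xi>)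
                  + (\<integral>\<^sup>+b. \<integral>\<^sup>+w. f (w, -1, a, b) \<partial>L a \<partial>\<xi>)) / 2 \<partial>\<xi>)"
    by (intro nn_integral_cong nn_integral_half_add nn_integral_measurable_subprob_algebra2[where N = MW])
      measurable
  also have "\<dots> = ((\<integral>\<^sup>+a. \<integral>\<^sup>+b. \<integral>\<^sup>+w. f (w, 1, a, b) \<partial>L b \<partial>\<xi> \<partial>\<xi>)
                  + (\<integral>\<^sup>+a. \<integral>\<^sup>+b. \<integral>\<^sup>+w. f (w, -1, a, b) \<partial>L a \<partial>\<xi> \<partial>\<xi>)) / 2"
    by (intro nn_integral_half_add) measurable
  also have "(\<integral>\<^sup>+a. \<integral>\<^sup>+b. \<integral>\<^sup>+w. f (w, 1, a, b) \<partial>L b \<partial>\<xi> \<partial>\<xi>) = (\<integral>\<^sup>+y. I y \<partial>\<xi>)"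
  proof -
    have "(\<integral>\<^sup>+a. \<integral>\<^sup>+b. \<integral>\<^sup>+w. f (w, 1, a, b) \<partial>L b \<partial>\<xi> \<partial>\<xi>) = (\<integral>\<^sup>+b. \<integral>\<^sup>+a. \<integral>\<^sup>+w. f (w, 1, a, b) \<partial>L b \<partial>\<xi> \<partial>\<xi>)"
      by (rule xi_xi.Fubini'[symmetric]) (unfold split_beta', measurable)
    also have "\<dots> = (\<integral>\<^sup>+y. I y \<partial>\<xi>)"
      unfolding I_def by (intro nn_integral_cong swap) measurable
    finally show ?thesis .
  qed
  also have "(\<integral>\<^sup>+a. \<integral>\<^sup>+b. \<integral>\<^sup>+w. f (w, -1, a, b) \<partial>L a \<partial>\<xi> \<partial>\<xi>) = (\<integral>\<^sup>+y. I' y \<partial>\<xi>)"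
    unfolding I'_def by (intro nn_integral_cong swap) measurable
  also have "((\<integral>\<^sup>+y. I y \<partial>\<xi>) + (\<integral>\<^sup>+y. I' y \<partial>\<xi>)) / 2 = (\<integral>\<^sup>+y. (I y + I' y) / 2 \<partial>\<xi>)"
    by (rule nn_integral_half_add[symmetric]) measurable
  also have "\<dots> = (\<integral>\<^sup>+y. \<integral>\<^sup>+w. ghost_average \<xi> f w y \<partial>L y \<partial>\<xi>)"
  proof (intro nn_integral_cong)
    fix y assume y [measurable]: "y \<in> space \<xi>"
    show "(I y + I' y) / 2 = (\<integral>\<^sup>+w. ghost_average \<xi> f w y \<partial>L y)"
      unfolding I_def I'_def ghost_average_def
      by (rule nn_integral_half_add[symmetric])
        (simp_all only: measurable_cong_sets[OF L_y(2)[OF y] refl], measurable)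
  qed
  finally show ?thesis .
qed

lemma nn_integral_weighted_ghost_average:
  assumes "sigma_finite_measure \<xi>" and [measurable]: "u \<in> borel_measurable \<xi>"
    and [measurable]: "f \<in> borel_measurable (MW \<Otimes>\<^sub>M (count_space UNIV \<Otimes>\<^sub>M (\<xi> \<Otimes>\<^sub>M \<xi>)))"
    and [measurable]: "w \<in> space MW"
  shows "(\<integral>\<^sup>+z. (u (snd z) * f (w, 1, z) + u (fst z) * f (w, -1, z)) / 2 \<partial>(\<xi> \<Otimes>\<^sub>M \<xi>))
    = (\<integral>\<^sup>+y. u y * ghost_average \<xi> f w y \<partial>\<xi>)"
proof -
  interpret xi: sigma_finite_measure \<xi> by fact
  interpret xi_xi: pair_sigma_finite \<xi> \<xi> ..
  have "(\<integral>\<^sup>+z. (u (snd z) * f (w, 1, z) + u (fst z) * f (w, -1, z)) / 2 \<partial>(\<xi> \<Otimes>\<^sub>M \<xi>))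
      = ((\<integral>\<^sup>+z. u (snd z) * f (w, 1, z) \<partial>(\<xi> \<Otimes>\<^sub>M \<xi>)) + (\<integral>\<^sup>+z. u (fst z) * f (w, -1, z) \<partial>(\<xi> \<Otimes>\<^sub>M \<xi>))) / 2"
    by (rule nn_integral_half_add) measurable
  also have "(\<integral>\<^sup>+z. u (snd z) * f (w, 1, z) \<partial>(\<xi> \<Otimes>\<^sub>M \<xi>)) = (\<integral>\<^sup>+y. u y * (\<integral>\<^sup>+a. f (w, 1, a, y) \<partial>\<xi>) \<partial>\<xi>)"
    by (subst xi_xi.nn_integral_snd[symmetric]) (simp_all, intro nn_integral_cong nn_integral_cmult, measurable)
  also have "(\<integral>\<^sup>+z. u (fst z) * f (w, -1, z) \<partial>(\<xi> \<Otimes>\<^sub>M \<xi>)) = (\<integral>\<^sup>+y. u y * (\<integral>\<^sup>+a. f (w, -1, y, a) \<partial>\<xi>) \<partial>\<xi>)"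
    by (subst xi.nn_integral_fst[symmetric]) (simp_all, intro nn_integral_cong nn_integral_cmult, measurable)
  also have "((\<integral>\<^sup>+y. u y * (\<integral>\<^sup>+a. f (w, 1, a, y) \<partial>\<xi>) \<partial>\<xi>) + (\<integral>\<^sup>+y. u y * (\<integral>\<^sup>+a. f (w, -1, y, a) \<partial>\<xi>) \<partial>\<xi>)) / 2
      = (\<integral>\<^sup>+y. (u y * (\<integral>\<^sup>+a. f (w, 1, a, y) \<partial>\<xi>) + u y * (\<integral>\<^sup>+a. f (w, -1, y, a) \<partial>\<xi>)) / 2 \<partial>\<xi>)"
    by (rule nn_integral_half_add[symmetric]) measurable
  finally show ?thesis
    by (simp add: ghost_average_def distrib_left ennreal_times_divide)
qed

lemma nn_integral_supersample_coord:
  assumes \<xi>: "prob_space \<xi>" and K [measurable]: "K \<in> PiM {..<n} (\<lambda>_. \<xi>) \<rightarrow>\<^sub>M prob_algebra MW"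
    and "i < n" and f [measurable]: "f \<in> borel_measurable (MW \<Otimes>\<^sub>M (count_space UNIV \<Otimes>\<^sub>M (\<xi> \<Otimes>\<^sub>M \<xi>)))"
  shows "(\<integral>\<^sup>+x. f (snd x, case fst x of (zm, zp, r) \<Rightarrow> r i, case fst x of (zm, zp, r) \<Rightarrow> (zm i, zp i))
            \<partial>supersample n \<xi> MW K)
    = (\<integral>\<^sup>+x. ghost_average \<xi> f (snd x) (fst x i) \<partial>standard_law n \<xi> MW K)"
proof -
  interpret xi: prob_space \<xi> by fact
  interpret R: prob_space rademacher by (rule prob_space_rademacher)
  interpret Z: product_sigma_finite "\<lambda>_. \<xi>" by unfold_locales
  define J where "J = {..<n} - {i}"
  have J: "finite J" "i \<notin> J" and IJ: "{..<n} = insert i J"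
    using \<open>i < n\<close> by (auto simp: J_def)
  let ?Z = "\<lambda>J. PiM J (\<lambda>_. \<xi>)" and ?R = "\<lambda>J. PiM J (\<lambda>_. rademacher)"
  interpret ZJ: prob_space "?Z J" by (intro prob_space_PiM \<xi>)
  interpret RJ: prob_space "?R J" by (intro prob_space_PiM prob_space_rademacher)
  have [measurable]: "i \<in> insert i J" by simp
  have [measurable]: "(\<lambda>x. x i) \<in> ?R (insert i J) \<rightarrow>\<^sub>M count_space UNIV"
    unfolding measurable_rademacher[symmetric] by measurable
  have K' [measurable]: "K \<in> ?Z (insert i J) \<rightarrow>\<^sub>M subprob_algebra MW"
    using measurable_prob_algebraD[OF K] by (simp add: IJ)
  have ghost [measurable]: "(\<lambda>(w, y). ghost_average \<xi> f w y) \<in> borel_measurable (MW \<Otimes>\<^sub>M \<xi>)"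
    by (intro measurable_ghost_average xi.sigma_finite_measure_axioms f)
  define F where "F = (\<lambda>(zm, zp, r). \<integral>\<^sup>+w. f (w, r i, zm i, zp i) \<partial>K (select_coords (insert i J) zm zp r))"
  have [measurable]: "F \<in> borel_measurable (?Z (insert i J) \<Otimes>\<^sub>M ?Z (insert i J) \<Otimes>\<^sub>M ?R (insert i J))"
    unfolding F_def split_beta' by (rule nn_integral_measurable_subprob_algebra2[where N = MW]) measurable
  define G where "G z = (\<integral>\<^sup>+w. ghost_average \<xi> f w (z i) \<partial>K z)" for z
  have [measurable]: "G \<in> borel_measurable (?Z (insert i J))"
    unfolding G_def by (rule nn_integral_measurable_subprob_algebra2[where N = MW]) measurable
  define H where "H X = (\<integral>\<^sup>+y. G (X(i := y)) \<partial>\<xi>)" for X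
  have [measurable]: "H \<in> borel_measurable (?Z J)"
    unfolding H_def using measurable_add_dim[of i J "\<lambda>_. \<xi>"] by measurable
  have "(\<integral>\<^sup>+x. f (snd x, case fst x of (zm, zp, r) \<Rightarrow> r i, case fst x of (zm, zp, r) \<Rightarrow> (zm i, zp i))
            \<partial>supersample n \<xi> MW K)
      = (\<integral>\<^sup>+zm. \<integral>\<^sup>+zp. \<integral>\<^sup>+r. F (zm, zp, r) \<partial>?R (insert i J) \<partial>?Z (insert i J) \<partial>?Z (insert i J))"
    using \<open>i < n\<close> by (subst nn_integral_supersample[OF \<xi> K])
      (simp_all add: supersample_base_def F_def IJ select_train_eq_select_coords)
  also have "\<dots> = (\<integral>\<^sup>+zm. \<integral>\<^sup>+zp. \<integral>\<^sup>+r. \<integral>\<^sup>+a. \<integral>\<^sup>+b. \<integral>\<^sup>+\<rho>. F (zm(i := a), zp(i := b), r(i := \<rho>))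
        \<partial>rademacher \<partial>\<xi> \<partial>\<xi> \<partial>?R J \<partial>?Z J \<partial>?Z J)"
    by (rule nn_integral_PiM_triple_insert[OF xi.sigma_finite_measure_axioms R.sigma_finite_measure_axioms J]) measurable
  also have "\<dots> = (\<integral>\<^sup>+zm. \<integral>\<^sup>+zp. \<integral>\<^sup>+r. H (select_coords J zm zp r) \<partial>?R J \<partial>?Z J \<partial>?Z J)"
  proof (rule nn_integral_cong, rule nn_integral_cong, rule nn_integral_cong)
    fix zm zp r assume [measurable]: "zm \<in> space (?Z J)" "zp \<in> space (?Z J)" "r \<in> space (?R J)"
    have "(\<lambda>y. K ((select_coords J zm zp r)(i := y))) \<in> \<xi> \<rightarrow>\<^sub>M prob_algebra MW"
      using measurable_add_dim[of i J "\<lambda>_. \<xi>"] K unfolding IJ by measurable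
    from nn_integral_ghost_average[OF \<xi> this f] J(2)
    show "(\<integral>\<^sup>+a. \<integral>\<^sup>+b. \<integral>\<^sup>+\<rho>. F (zm(i := a), zp(i := b), r(i := \<rho>)) \<partial>rademacher \<partial>\<xi> \<partial>\<xi>)
        = H (select_coords J zm zp r)"
      by (simp add: F_def G_def H_def select_coords_insert)
  qed
  also have "\<dots> = (\<integral>\<^sup>+X. H X \<partial>?Z J)"
    by (rule nn_integral_select_coords[OF \<xi> J(1)]) measurable
  also have "\<dots> = (\<integral>\<^sup>+z. G z \<partial>?Z {..<n})"
    unfolding IJ H_def by (rule Z.product_nn_integral_insert[OF J, symmetric]) measurable
  also have "\<dots> = (\<integral>\<^sup>+x. ghost_average \<xi> f (snd x) (fst x i) \<partial>standard_law n \<xi> MW K)"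
    using \<open>i < n\<close> by (subst nn_integral_standard_law[OF K]) (simp_all add: G_def[abs_def] split_beta')
  finally show ?thesis .
qed

section \<open>Conditional products under independence\<close>

lemma sets_pair_measure_triple:
  fixes MX :: "'a measure" and MY :: "'b measure" and MZ :: "'c measure"
  defines "\<Omega> \<equiv> space MX \<times> space MY \<times> space MZ"
    and "E \<equiv> {A \<times> B \<times> C | A B C. A \<in> sets MX \<and> B \<in> sets MY \<and> C \<in> sets MZ}"
  shows "sets (MX \<Otimes>\<^sub>M MY \<Otimes>\<^sub>M MZ) = sigma_sets \<Omega> E" and "E \<subseteq> Pow \<Omega>" and "Int_stable E" and "\<Omega> \<in> E"
proof -
  let ?E2 = "{B \<times> C | B C. B \<in> sets MY \<and> C \<in> sets MZ}"
  have space_YZ: "space (MY \<Otimes>\<^sub>M MZ) = space MY \<times> space MZ"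
    by (rule space_pair_measure)
  have E2: "?E2 \<subseteq> Pow (space (MY \<Otimes>\<^sub>M MZ))"
    by (auto simp: space_YZ dest: sets.sets_into_space)
  have "sets (MX \<Otimes>\<^sub>M MY \<Otimes>\<^sub>M MZ)
      = sets (sigma (space MX \<times> space (MY \<Otimes>\<^sub>M MZ)) {A \<times> D | A D. A \<in> sets MX \<and> D \<in> ?E2})"
  proof (rule sets_pair_eq[where Ca = "{space MX}" and Cb = "{space (MY \<Otimes>\<^sub>M MZ)}"])
    show "sets (MY \<Otimes>\<^sub>M MZ) = sigma_sets (space (MY \<Otimes>\<^sub>M MZ)) ?E2"
      unfolding space_YZ by (rule sets_pair_measure)
  qed (use E2 sets.space_closed[of MX] in \<open>auto simp: space_YZ sets.sigma_sets_eq\<close>)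
  moreover have "{A \<times> D | A D. A \<in> sets MX \<and> D \<in> ?E2} = E"
    unfolding E_def by blast
  moreover show "E \<subseteq> Pow \<Omega>"
    unfolding \<Omega>_def E_def by (auto dest: sets.sets_into_space)
  ultimately show "sets (MX \<Otimes>\<^sub>M MY \<Otimes>\<^sub>M MZ) = sigma_sets \<Omega> E"
    by (simp add: space_YZ \<Omega>_def)
  show "Int_stable E"
  proof (rule Int_stableI)
    fix S T assume "S \<in> E" "T \<in> E"
    then obtain A B C A' B' C' where "S = A \<times> B \<times> C" "T = A' \<times> B' \<times> C'"
      "A \<in> sets MX" "B \<in> sets MY" "C \<in> sets MZ" "A' \<in> sets MX" "B' \<in> sets MY" "C' \<in> sets MZ"
      unfolding E_def by blast
    then show "S \<inter> T \<in> E"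
      unfolding E_def by (intro CollectI exI[of _ "A \<inter> A'"] exI[of _ "B \<inter> B'"] exI[of _ "C \<inter> C'"]) auto
  qed
  show "\<Omega> \<in> E"
    unfolding \<Omega>_def E_def by blast
qed

lemma measure_eqI_triple_rectangles:
  assumes sets_M: "sets M = sets (MX \<Otimes>\<^sub>M MY \<Otimes>\<^sub>M MZ)" and sets_N: "sets N = sets (MX \<Otimes>\<^sub>M MY \<Otimes>\<^sub>M MZ)"
    and fin: "emeasure M (space M) \<noteq> \<infinity>"
    and eq: "\<And>A B C. A \<in> sets MX \<Longrightarrow> B \<in> sets MY \<Longrightarrow> C \<in> sets MZ \<Longrightarrow>
      emeasure M (A \<times> B \<times> C) = emeasure N (A \<times> B \<times> C)"
  shows "M = N"
proof -
  note gen = sets_pair_measure_triple[of MX MY MZ]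
  have "space M = space MX \<times> space MY \<times> space MZ"
    using sets_eq_imp_space_eq[OF sets_M] by (simp add: space_pair_measure)
  then show ?thesis
    using gen(4) fin eq sets_M sets_N
    by (intro measure_eqI_generator_eq[OF gen(3,2), where A = "\<lambda>_. space MX \<times> space MY \<times> space MZ"])
      (auto simp: gen(1))
qed

lemma emeasure_distr_density_indicator:
  assumes "E \<in> sets M" and "Z \<in> M \<rightarrow>\<^sub>M MZ" and "C \<in> sets MZ"
  shows "emeasure (distr (density M (indicator E)) MZ Z) C = emeasure M (E \<inter> Z -` C \<inter> space M)"
proof -
  have "Z -` C \<inter> space M \<in> sets M"
    using assms(2,3) by measurable
  moreover have "Z \<in> density M (indicator E) \<rightarrow>\<^sub>M MZ"
    using assms(2) by (simp cong: measurable_cong_sets)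
  ultimately show ?thesis
    using assms by (simp add: emeasure_distr emeasure_density indicator_inter_arith[symmetric] Int_assoc)
qed

lemma set_nn_integral_cond_prob:
  assumes "prob_space M" and [measurable]: "X \<in> M \<rightarrow>\<^sub>M MX" and Z [measurable]: "Z \<in> M \<rightarrow>\<^sub>M MZ"
    and [measurable]: "A \<in> sets MX" and C: "C \<in> sets MZ"
  shows "(\<integral>\<^sup>+z\<in>C. cond_prob M MX MZ X Z A z \<partial>distr M MZ Z) = emeasure M (X -` A \<inter> Z -` C \<inter> space M)"
proof -
  interpret PZ: prob_space "distr M MZ Z"
    using \<open>prob_space M\<close> by (rule prob_space.prob_space_distr) measurable
  let ?\<nu> = "distr (density M (indicator (X -` A \<inter> space M))) MZ Z"
  have \<nu>: "emeasure ?\<nu> C' = emeasure M (X -` A \<inter> Z -` C' \<inter> space M)" if "C' \<in> sets MZ" for C'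
    using emeasure_distr_density_indicator[of "X -` A \<inter> space M" M Z MZ C'] that
    by (simp add: Int_ac)
  have "absolutely_continuous (distr M MZ Z) ?\<nu>"
  unfolding absolutely_continuous_def
  proof
    fix C' assume C': "C' \<in> null_sets (distr M MZ Z)"
    then have "C' \<in> sets MZ" and "emeasure M (Z -` C' \<inter> space M) = 0"
      using emeasure_distr[OF Z, of C'] by (auto simp: null_sets_def)
    moreover have "emeasure M (X -` A \<inter> Z -` C' \<inter> space M) \<le> emeasure M (Z -` C' \<inter> space M)"
      using \<open>C' \<in> sets MZ\<close> by (intro emeasure_mono) auto
    ultimately show "C' \<in> null_sets ?\<nu>"
      by (simp add: \<nu> null_sets_def)
  qed
  then have "density (distr M MZ Z) (cond_prob M MX MZ X Z A) = ?\<nu>"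
    unfolding cond_prob_def by (rule PZ.density_RN_deriv) simp
  then show ?thesis
    using C by (simp add: \<nu> emeasure_density[symmetric] cond_prob_def)
qed

lemma AE_cond_prob_indep:
  assumes "prob_space M" and [measurable]: "Y \<in> M \<rightarrow>\<^sub>M MY" and Z [measurable]: "Z \<in> M \<rightarrow>\<^sub>M MZ"
    and [measurable]: "B \<in> sets MY"
    and indep: "\<And>C. C \<in> sets MZ \<Longrightarrow>
      emeasure M (Y -` B \<inter> Z -` C \<inter> space M) = emeasure M (Y -` B \<inter> space M) * emeasure M (Z -` C \<inter> space M)"
  shows "AE z in distr M MZ Z. cond_prob M MY MZ Y Z B z = emeasure M (Y -` B \<inter> space M)"
proof -
  interpret PZ: prob_space "distr M MZ Z"
    using \<open>prob_space M\<close> by (rule prob_space.prob_space_distr) measurable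
  have "density (distr M MZ Z) (\<lambda>_. emeasure M (Y -` B \<inter> space M))
      = distr (density M (indicator (Y -` B \<inter> space M))) MZ Z"
  proof (rule measure_eqI)
    fix C assume "C \<in> sets (density (distr M MZ Z) (\<lambda>_. emeasure M (Y -` B \<inter> space M)))"
    then have C: "C \<in> sets MZ" by simp
    show "emeasure (density (distr M MZ Z) (\<lambda>_. emeasure M (Y -` B \<inter> space M))) C
        = emeasure (distr (density M (indicator (Y -` B \<inter> space M))) MZ Z) C"
    proof -
      have "(Y -` B \<inter> space M) \<inter> Z -` C \<inter> space M = Y -` B \<inter> Z -` C \<inter> space M"
        by auto
      then show ?thesis
        using emeasure_distr_density_indicator[of "Y -` B \<inter> space M" M Z MZ C] C
        by (simp add: emeasure_density_const emeasure_distr[OF Z] indep)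
    qed
  qed simp
  then have "AE z in distr M MZ Z. emeasure M (Y -` B \<inter> space M) = cond_prob M MY MZ Y Z B z"
    unfolding cond_prob_def by (intro PZ.RN_deriv_unique) simp
  then show ?thesis
    by eventually_elim simp
qed

lemma cond_product_eqI:
  assumes sets_Q: "sets Q = sets (MX \<Otimes>\<^sub>M MY \<Otimes>\<^sub>M MZ)" and "emeasure Q (space Q) \<noteq> \<infinity>"
    and rect: "\<And>A B C. A \<in> sets MX \<Longrightarrow> B \<in> sets MY \<Longrightarrow> C \<in> sets MZ \<Longrightarrow>
      emeasure Q (A \<times> B \<times> C) =
        (\<integral>\<^sup>+z\<in>C. cond_prob M MX MZ X Z A z * cond_prob M MY MZ Y Z B z \<partial>distr M MZ Z)"
  shows "cond_product M MX MY MZ X Y Z = Q"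
  unfolding cond_product_def
proof (rule the_equality)
  fix Q' assume Q': "sets Q' = sets (MX \<Otimes>\<^sub>M MY \<Otimes>\<^sub>M MZ) \<and>
    (\<forall>A\<in>sets MX. \<forall>B\<in>sets MY. \<forall>C\<in>sets MZ. emeasure Q' (A \<times> B \<times> C) =
        (\<integral>\<^sup>+z\<in>C. cond_prob M MX MZ X Z A z * cond_prob M MY MZ Y Z B z \<partial>distr M MZ Z))"
  show "Q' = Q"
    by (rule measure_eqI_triple_rectangles[OF sets_Q _ assms(2), symmetric]) (use Q' rect in auto)
qed (use assms in auto)

lemma cond_product_indep:
  fixes M :: "'o measure" and MX :: "'a measure" and MY :: "'b measure" and MZ :: "'c measure"
    and X :: "'o \<Rightarrow> 'a" and Y :: "'o \<Rightarrow> 'b" and Z :: "'o \<Rightarrow> 'c"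
  defines "L \<equiv> distr M (MX \<Otimes>\<^sub>M MY \<Otimes>\<^sub>M MZ) (\<lambda>\<omega>. (X \<omega>, Y \<omega>, Z \<omega>))"
  assumes "prob_space M"
    and X [measurable]: "X \<in> M \<rightarrow>\<^sub>M MX" and Y [measurable]: "Y \<in> M \<rightarrow>\<^sub>M MY" and Z [measurable]: "Z \<in> M \<rightarrow>\<^sub>M MZ"
    and indep: "\<And>B C. B \<in> sets MY \<Longrightarrow> C \<in> sets MZ \<Longrightarrow>
      emeasure L (space MX \<times> B \<times> C) = emeasure L (space MX \<times> B \<times> space MZ) * emeasure L (space MX \<times> space MY \<times> C)"
    and sets_Q: "sets Q = sets (MX \<Otimes>\<^sub>M MY \<Otimes>\<^sub>M MZ)" and fin_Q: "emeasure Q (space Q) \<noteq> \<infinity>"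
    and Q: "\<And>A B C. A \<in> sets MX \<Longrightarrow> B \<in> sets MY \<Longrightarrow> C \<in> sets MZ \<Longrightarrow>
      emeasure Q (A \<times> B \<times> C) = emeasure L (space MX \<times> B \<times> space MZ) * emeasure L (A \<times> space MY \<times> C)"
  shows "cond_product M MX MY MZ X Y Z = Q"
proof (rule cond_product_eqI[OF sets_Q fin_Q])
  have L: "emeasure L (A \<times> B \<times> C) = emeasure M {\<omega> \<in> space M. X \<omega> \<in> A \<and> Y \<omega> \<in> B \<and> Z \<omega> \<in> C}"
    if "A \<in> sets MX" "B \<in> sets MY" "C \<in> sets MZ" for A B C
    unfolding L_def using that by (subst emeasure_distr) (auto intro!: arg_cong[where f = "emeasure M"])
  have in_space: "X \<omega> \<in> space MX" "Y \<omega> \<in> space MY" "Z \<omega> \<in> space MZ" if "\<omega> \<in> space M" for \<omega>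
    using that by (auto intro: measurable_space)
  have L_XZ: "emeasure L (A \<times> space MY \<times> C) = emeasure M (X -` A \<inter> Z -` C \<inter> space M)"
    if "A \<in> sets MX" "C \<in> sets MZ" for A C
    using L[OF that(1) sets.top that(2)] in_space by (auto intro!: arg_cong[where f = "emeasure M"])
  have L_YZ: "emeasure L (space MX \<times> B \<times> C) = emeasure M (Y -` B \<inter> Z -` C \<inter> space M)"
    if "B \<in> sets MY" "C \<in> sets MZ" for B C
    using L[OF sets.top that] in_space by (auto intro!: arg_cong[where f = "emeasure M"])
  have L_Y: "emeasure L (space MX \<times> B \<times> space MZ) = emeasure M (Y -` B \<inter> space M)"
    if "B \<in> sets MY" for B
    using L_YZ[OF that sets.top] in_space by (auto intro!: arg_cong[where f = "emeasure M"])
  have L_Z: "emeasure L (space MX \<times> space MY \<times> C) = emeasure M (Z -` C \<inter> space M)"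
    if "C \<in> sets MZ" for C
    using L_YZ[OF sets.top that] in_space by (auto intro!: arg_cong[where f = "emeasure M"])
  fix A B C assume [measurable]: "A \<in> sets MX" "B \<in> sets MY" "C \<in> sets MZ"
  have "emeasure M (Y -` B \<inter> Z -` C' \<inter> space M) = emeasure M (Y -` B \<inter> space M) * emeasure M (Z -` C' \<inter> space M)"
    if "C' \<in> sets MZ" for C'
    using indep[OF \<open>B \<in> sets MY\<close> that]
    by (simp only: L_YZ[OF \<open>B \<in> sets MY\<close> that] L_Y[OF \<open>B \<in> sets MY\<close>] L_Z[OF that])
  then have "AE z in distr M MZ Z. cond_prob M MY MZ Y Z B z = emeasure M (Y -` B \<inter> space M)"
    by (rule AE_cond_prob_indep[OF \<open>prob_space M\<close> Y Z \<open>B \<in> sets MY\<close>])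
  then have "(\<integral>\<^sup>+z\<in>C. cond_prob M MX MZ X Z A z * cond_prob M MY MZ Y Z B z \<partial>distr M MZ Z)
      = (\<integral>\<^sup>+z. emeasure M (Y -` B \<inter> space M) * (cond_prob M MX MZ X Z A z * indicator C z) \<partial>distr M MZ Z)"
    by (intro nn_integral_cong_AE) (auto simp: mult_ac)
  also have "\<dots> = emeasure M (Y -` B \<inter> space M) * emeasure M (X -` A \<inter> Z -` C \<inter> space M)"
    using set_nn_integral_cond_prob[OF \<open>prob_space M\<close> X Z, of A C]
    by (subst nn_integral_cmult) (auto simp: cond_prob_def)
  also have "\<dots> = emeasure Q (A \<times> B \<times> C)"
    by (simp add: Q L_XZ L_Y)
  finally show "emeasure Q (A \<times> B \<times> C)
      = (\<integral>\<^sup>+z\<in>C. cond_prob M MX MZ X Z A z * cond_prob M MY MZ Y Z B z \<partial>distr M MZ Z)" ..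
qed

section \<open>Kullback-Leibler divergence of densities\<close>

(* The integral as it appears in KL_div; note that \<infinity> - \<infinity> = \<infinity> in ereal. *)
definition ereal_integral :: "'a measure \<Rightarrow> ('a \<Rightarrow> real) \<Rightarrow> ereal" where
  "ereal_integral M f = enn2ereal (\<integral>\<^sup>+x. ennreal (f x) \<partial>M) - enn2ereal (\<integral>\<^sup>+x. ennreal (- f x) \<partial>M)"

lemma ereal_integral_eq_integral:
  assumes "integrable M f"
  shows "ereal_integral M f = ereal (\<integral>x. f x \<partial>M)"
proof -
  have enn2ereal_finite: "enn2ereal x = ereal (enn2real x)" if "x \<noteq> \<top>" for x
    using that by (cases x rule: ennreal_cases) (auto simp: enn2ereal_ennreal)
  have "(\<integral>\<^sup>+x. ennreal (f x) \<partial>M) \<noteq> \<top>" "(\<integral>\<^sup>+x. ennreal (- f x) \<partial>M) \<noteq> \<top>"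
    using assms by (auto simp: real_integrable_def)
  then show ?thesis
    unfolding ereal_integral_def real_lebesgue_integral_def[OF assms] by (simp add: enn2ereal_finite)
qed

lemma ereal_integral_distr:
  "T \<in> M \<rightarrow>\<^sub>M N \<Longrightarrow> f \<in> borel_measurable N \<Longrightarrow>
    ereal_integral (distr M N T) f = ereal_integral M (\<lambda>x. f (T x))"
  by (simp add: ereal_integral_def nn_integral_distr)

lemma KL_div_density:
  assumes "sigma_finite_measure Q" and g [measurable]: "g \<in> borel_measurable Q" and "\<And>x. 0 \<le> g x"
    and P: "P = density Q (\<lambda>x. ennreal (g x))"
  shows "KL_div P Q = ereal_integral P (\<lambda>x. ln (g x))"
proof -
  interpret Q: sigma_finite_measure Q by fact
  have "AE x in Q. ennreal (g x) = RN_deriv Q P x"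
    unfolding P by (rule Q.RN_deriv_unique) simp_all
  then have "AE x in P. enn2real (RN_deriv Q P x) = g x"
    unfolding P by (subst AE_density) (auto elim!: AE_mp simp: \<open>\<And>x. 0 \<le> g x\<close>)
  then have "ereal_integral P (\<lambda>x. ln (enn2real (RN_deriv Q P x))) = ereal_integral P (\<lambda>x. ln (g x))"
    unfolding ereal_integral_def by (intro arg_cong2[where f = "(-)"] arg_cong[where f = enn2ereal] nn_integral_cong_AE) auto
  moreover have "absolutely_continuous Q P"
    unfolding P by (rule absolutely_continuousI_density) simp
  ultimately show ?thesis
    by (simp add: KL_div_def ereal_integral_def)
qed

lemma ereal_integral_ln_div_le:
  assumes "prob_space M" and [measurable]: "h \<in> borel_measurable M" "k \<in> borel_measurable M"
    and pos: "AE x in M. 0 < h x \<and> 0 < k x"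
    and inv_k: "(\<integral>\<^sup>+x. ennreal (1 / k x) \<partial>M) \<le> 1"
    and fin_ratio: "(\<integral>\<^sup>+x. ennreal (ln (h x / k x)) \<partial>M) \<noteq> \<infinity>"
    and fin_neg: "(\<integral>\<^sup>+x. ennreal (- ln (h x)) \<partial>M) \<noteq> \<infinity>"
  shows "ereal_integral M (\<lambda>x. ln (h x / k x)) \<le> ereal_integral M (\<lambda>x. ln (h x))"
proof (cases "(\<integral>\<^sup>+x. ennreal (ln (h x)) \<partial>M) = \<infinity>")
  case True
  then show ?thesis
    using fin_neg by (cases "(\<integral>\<^sup>+x. ennreal (- ln (h x)) \<partial>M)") (auto simp: ereal_integral_def)
next
  case False
  interpret prob_space M by fact
  have int_h: "integrable M (\<lambda>x. ln (h x))"
    using False fin_neg by (simp add: real_integrable_def)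
  show ?thesis
  proof (cases "(\<integral>\<^sup>+x. ennreal (- ln (h x / k x)) \<partial>M) = \<infinity>")
    case True
    then show ?thesis
      using fin_ratio by (cases "(\<integral>\<^sup>+x. ennreal (ln (h x / k x)) \<partial>M)") (auto simp: ereal_integral_def)
  next
    case False
    then have int_ratio: "integrable M (\<lambda>x. ln (h x / k x))"
      using fin_ratio by (simp add: real_integrable_def)
    have k_nonneg: "AE x in M. 0 \<le> 1 / k x"
      using pos by eventually_elim simp
    have "(\<integral>\<^sup>+x. ennreal (1 / k x) \<partial>M) < \<top>"
      using inv_k by (simp add: order.strict_trans1)
    then have int_k: "integrable M (\<lambda>x. 1 / k x)"
      using k_nonneg
      by (intro integrableI_nn_integral_finite[where x = "enn2real (\<integral>\<^sup>+x. ennreal (1 / k x) \<partial>M)"]) auto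
    have "(\<integral>x. 1 / k x \<partial>M) = enn2real (\<integral>\<^sup>+x. ennreal (1 / k x) \<partial>M)"
      using k_nonneg by (intro integral_eq_nn_integral) auto
    also have "\<dots> \<le> 1"
      using inv_k by (simp add: enn2real_leI)
    finally have "(\<integral>x. 1 / k x \<partial>M) \<le> 1" .
    have "(\<integral>x. ln (h x / k x) \<partial>M) \<le> (\<integral>x. ln (h x) + (1 / k x - 1) \<partial>M)"
      using int_ratio int_h int_k
    proof (intro integral_mono_AE)
      show "AE x in M. ln (h x / k x) \<le> ln (h x) + (1 / k x - 1)"
        using pos
      proof eventually_elim
        case (elim x)
        then have "ln (1 / k x) \<le> 1 / k x - 1"
          by (intro ln_le_minus_one) simp
        with elim show ?case
          by (simp add: ln_div)
      qed
    qed auto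
    also have "\<dots> = (\<integral>x. ln (h x) \<partial>M) + ((\<integral>x. 1 / k x \<partial>M) - 1)"
      using int_h int_k by (simp add: prob_space)
    also have "\<dots> \<le> (\<integral>x. ln (h x) \<partial>M)"
      using \<open>(\<integral>x. 1 / k x \<partial>M) \<le> 1\<close> by simp
    finally show ?thesis
      using int_ratio int_h by (simp add: ereal_integral_eq_integral)
  qed
qed

lemma ennreal_mult_neg_ln_le_1:
  assumes "0 \<le> x"
  shows "ennreal x * ennreal (- ln x) \<le> 1"
proof (cases "0 < x \<and> ln x < 0")
  case True
  have "ln (1 / x) \<le> 1 / x - 1"
    using True by (intro ln_le_minus_one) simp
  then have "x * (- ln x) \<le> x * (1 / x - 1)"
    using True by (intro mult_left_mono) (auto simp: ln_div)
  also have "\<dots> \<le> 1"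
    using True by (simp add: field_simps)
  finally have "x * (- ln x) \<le> 1" .
  moreover have "ennreal x * ennreal (- ln x) = ennreal (x * (- ln x))"
    using True by (intro ennreal_mult[symmetric]) auto
  ultimately show ?thesis
    by (simp only: ennreal_le_1)
next
  case False
  with assms show ?thesis
    by (auto simp: ennreal_neg)
qed

section \<open>Ghost couplings\<close>

definition train_pair :: "'w \<times> int \<times> 'z \<times> 'z \<Rightarrow> 'w \<times> 'z" where
  "train_pair = (\<lambda>(w, r, a, b). (w, if r = 1 then b else a))"

(* P plays the role of the law of (W, Z_i) and L that of (W, R_i, Z_i^-, Z_i^+). *)
locale ghost_coupling =
  fixes \<xi> :: "'z measure" and MW :: "'w measure"
    and P :: "('w \<times> 'z) measure" and L :: "('w \<times> int \<times> 'z \<times> 'z) measure"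
  assumes prob_space_xi: "prob_space \<xi>"
    and prob_space_P: "prob_space P" and sets_P [measurable_cong]: "sets P = sets (MW \<Otimes>\<^sub>M \<xi>)"
    and distr_P_snd: "distr P \<xi> snd = \<xi>"
    and sets_L [measurable_cong]: "sets L = sets (MW \<Otimes>\<^sub>M (count_space UNIV \<Otimes>\<^sub>M (\<xi> \<Otimes>\<^sub>M \<xi>)))"
    and nn_integral_L: "\<And>f. f \<in> borel_measurable (MW \<Otimes>\<^sub>M (count_space UNIV \<Otimes>\<^sub>M (\<xi> \<Otimes>\<^sub>M \<xi>))) \<Longrightarrow>
      (\<integral>\<^sup>+x. f x \<partial>L) = (\<integral>\<^sup>+x. ghost_average \<xi> f (fst x) (snd x) \<partial>P)"
begin

sublocale xi: prob_space \<xi>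
  by (rule prob_space_xi)

lemma measurable_train_pair [measurable]:
  "train_pair \<in> MW \<Otimes>\<^sub>M (count_space UNIV \<Otimes>\<^sub>M (\<xi> \<Otimes>\<^sub>M \<xi>)) \<rightarrow>\<^sub>M MW \<Otimes>\<^sub>M \<xi>"
  unfolding train_pair_def split_beta' by measurable

lemma nn_integral_P_snd:
  assumes [measurable]: "G \<in> borel_measurable \<xi>"
  shows "(\<integral>\<^sup>+x. G (snd x) \<partial>P) = (\<integral>\<^sup>+y. G y \<partial>\<xi>)"
proof -
  have "(\<integral>\<^sup>+x. G (snd x) \<partial>P) = (\<integral>\<^sup>+y. G y \<partial>distr P \<xi> snd)"
    by (rule nn_integral_distr[symmetric]) measurable
  then show ?thesis
    by (simp only: distr_P_snd)
qed

lemma ghost_average_train_pair: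
  "F \<in> borel_measurable (MW \<Otimes>\<^sub>M \<xi>) \<Longrightarrow> ghost_average \<xi> (\<lambda>x. F (train_pair x)) w y = F (w, y)"
  by (simp add: ghost_average_def train_pair_def xi.emeasure_space_1 ennreal_half_double)

lemma distr_L_train_pair: "distr L (MW \<Otimes>\<^sub>M \<xi>) train_pair = P"
proof (rule measure_eqI)
  fix A assume "A \<in> sets (distr L (MW \<Otimes>\<^sub>M \<xi>) train_pair)"
  then have [measurable]: "A \<in> sets (MW \<Otimes>\<^sub>M \<xi>)" by simp
  have "emeasure (distr L (MW \<Otimes>\<^sub>M \<xi>) train_pair) A = (\<integral>\<^sup>+x. indicator A (train_pair x) \<partial>L)"
    by (subst nn_integral_indicator[symmetric], simp) (rule nn_integral_distr, measurable)
  also have "\<dots> = emeasure P A"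
    by (simp add: nn_integral_L ghost_average_train_pair sets_P)
  finally show "emeasure (distr L (MW \<Otimes>\<^sub>M \<xi>) train_pair) A = emeasure P A" .
qed (simp add: sets_P)

lemma prob_space_L: "prob_space L"
proof (rule prob_space_distrD)
  show "train_pair \<in> L \<rightarrow>\<^sub>M MW \<Otimes>\<^sub>M \<xi>"
    by measurable
  show "prob_space (distr L (MW \<Otimes>\<^sub>M \<xi>) train_pair)"
    by (simp add: distr_L_train_pair prob_space_P)
qed

lemma emeasure_L_space_sign_pair:
  assumes [measurable]: "C \<in> sets (\<xi> \<Otimes>\<^sub>M \<xi>)"
  shows "emeasure L (space MW \<times> B \<times> C) = emeasure rademacher B * emeasure (\<xi> \<Otimes>\<^sub>M \<xi>) C"
proof -
  interpret xi_xi: pair_sigma_finite \<xi> \<xi> ..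
  have [measurable]: "B \<in> sets (count_space UNIV)" by simp
  have "emeasure L (space MW \<times> B \<times> C) = (\<integral>\<^sup>+x. indicator (space MW \<times> B \<times> C) x \<partial>L)"
    by (simp add: sets_L)
  also have "\<dots> = (\<integral>\<^sup>+x. (indicator B 1 * (\<integral>\<^sup>+a. indicator C (a, snd x) \<partial>\<xi>)
                      + indicator B (-1) * (\<integral>\<^sup>+a. indicator C (snd x, a) \<partial>\<xi>)) / 2 \<partial>P)"
  proof (subst nn_integral_L, measurable, intro nn_integral_cong)
    fix x assume "x \<in> space P"
    then have "fst x \<in> space MW" and [measurable]: "snd x \<in> space \<xi>"
      by (auto simp: space_pair_measure sets_eq_imp_space_eq[OF sets_P])
    then show "ghost_average \<xi> (indicator (space MW \<times> B \<times> C)) (fst x) (snd x)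
        = (indicator B 1 * (\<integral>\<^sup>+a. indicator C (a, snd x) \<partial>\<xi>)
            + indicator B (-1) * (\<integral>\<^sup>+a. indicator C (snd x, a) \<partial>\<xi>)) / 2"
      by (simp add: ghost_average_def indicator_times nn_integral_cmult)
  qed
  also have "\<dots> = (indicator B 1 * (\<integral>\<^sup>+y. \<integral>\<^sup>+a. indicator C (a, y) \<partial>\<xi> \<partial>\<xi>)
                  + indicator B (-1) * (\<integral>\<^sup>+y. \<integral>\<^sup>+a. indicator C (y, a) \<partial>\<xi> \<partial>\<xi>)) / 2"
    by (subst nn_integral_P_snd, measurable) (simp add: nn_integral_half_add nn_integral_cmult)
  also have "(\<integral>\<^sup>+y. \<integral>\<^sup>+a. indicator C (a, y) \<partial>\<xi> \<partial>\<xi>) = emeasure (\<xi> \<Otimes>\<^sub>M \<xi>) C"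
    using xi_xi.nn_integral_snd[of "indicator C"] by simp
  also have "(\<integral>\<^sup>+y. \<integral>\<^sup>+a. indicator C (y, a) \<partial>\<xi> \<partial>\<xi>) = emeasure (\<xi> \<Otimes>\<^sub>M \<xi>) C"
    using xi.nn_integral_fst[of "indicator C" \<xi>] by simp
  finally show ?thesis
    by (simp add: emeasure_rademacher divide_ennreal_def distrib_left distrib_right mult_ac)
qed

end

locale ghost_coupling_ac = ghost_coupling \<xi> MW P L
  for \<xi> :: "'z measure" and MW :: "'w measure" and P L +
  assumes ac: "absolutely_continuous (distr P MW fst \<Otimes>\<^sub>M \<xi>) P"
begin

abbreviation "PW \<equiv> distr P MW fst"

lemma prob_space_PW: "prob_space PW"
  by (intro prob_space.prob_space_distr prob_space_P) measurable

sublocale PW_xi: pair_prob_space PW \<xi>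
  by (intro pair_prob_space.intro pair_sigma_finite.intro prob_space_imp_sigma_finite prob_space_PW
      xi.sigma_finite_measure_axioms prob_space_xi)

definition info_density :: "'w \<times> 'z \<Rightarrow> real" where
  "info_density x = enn2real (RN_deriv (PW \<Otimes>\<^sub>M \<xi>) P x)"

lemma measurable_info_density [measurable]: "info_density \<in> borel_measurable (MW \<Otimes>\<^sub>M \<xi>)"
proof -
  have "info_density \<in> borel_measurable (PW \<Otimes>\<^sub>M \<xi>)"
    unfolding info_density_def by measurable
  then show ?thesis
    by (simp cong: measurable_cong_sets)
qed

lemma info_density_nonneg: "0 \<le> info_density x"
  by (simp add: info_density_def)

lemma P_eq_density: "P = density (PW \<Otimes>\<^sub>M \<xi>) (\<lambda>x. ennreal (info_density x))"
proof -
  have sets_eq: "sets P = sets (PW \<Otimes>\<^sub>M \<xi>)"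
    by (simp add: sets_P cong: sets_pair_measure_cong)
  have "AE x in PW \<Otimes>\<^sub>M \<xi>. RN_deriv (PW \<Otimes>\<^sub>M \<xi>) P x \<noteq> \<infinity>"
    using prob_space_imp_sigma_finite[OF prob_space_P] ac sets_eq by (rule PW_xi.P.RN_deriv_finite)
  then have "density (PW \<Otimes>\<^sub>M \<xi>) (\<lambda>x. ennreal (info_density x)) = density (PW \<Otimes>\<^sub>M \<xi>) (RN_deriv (PW \<Otimes>\<^sub>M \<xi>) P)"
    by (intro density_cong) (auto simp: info_density_def less_top)
  also have "\<dots> = P"
    using ac sets_eq by (rule PW_xi.P.density_RN_deriv)
  finally show ?thesis ..
qed

definition indep_law :: "('w \<times> int \<times> 'z \<times> 'z) measure" where
  "indep_law = distr ((PW \<Otimes>\<^sub>M (\<xi> \<Otimes>\<^sub>M \<xi>)) \<Otimes>\<^sub>M rademacher)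
     (MW \<Otimes>\<^sub>M (count_space UNIV \<Otimes>\<^sub>M (\<xi> \<Otimes>\<^sub>M \<xi>))) (\<lambda>((w, z), r). (w, r, z))"

lemma measurable_indep_law_map [measurable]:
  "(\<lambda>((w, z), r). (w, r, z)) \<in> (PW \<Otimes>\<^sub>M (\<xi> \<Otimes>\<^sub>M \<xi>)) \<Otimes>\<^sub>M rademacher \<rightarrow>\<^sub>M
     MW \<Otimes>\<^sub>M (count_space UNIV \<Otimes>\<^sub>M (\<xi> \<Otimes>\<^sub>M \<xi>))"
proof -
  have "snd \<in> (PW \<Otimes>\<^sub>M (\<xi> \<Otimes>\<^sub>M \<xi>)) \<Otimes>\<^sub>M rademacher \<rightarrow>\<^sub>M count_space UNIV"
    unfolding measurable_rademacher[symmetric] by measurable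
  then show ?thesis
    unfolding split_beta' by measurable
qed

lemma sets_indep_law [measurable_cong]:
  "sets indep_law = sets (MW \<Otimes>\<^sub>M (count_space UNIV \<Otimes>\<^sub>M (\<xi> \<Otimes>\<^sub>M \<xi>)))"
  by (simp add: indep_law_def)

lemma nn_integral_indep_law:
  assumes [measurable]: "f \<in> borel_measurable (MW \<Otimes>\<^sub>M (count_space UNIV \<Otimes>\<^sub>M (\<xi> \<Otimes>\<^sub>M \<xi>)))"
  shows "(\<integral>\<^sup>+x. f x \<partial>indep_law)
    = (\<integral>\<^sup>+x. (f (fst x, 1, snd x) + f (fst x, -1, snd x)) / 2 \<partial>(PW \<Otimes>\<^sub>M (\<xi> \<Otimes>\<^sub>M \<xi>)))"
proof -
  interpret R: prob_space rademacher by (rule prob_space_rademacher)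
  have "(\<integral>\<^sup>+x. f x \<partial>indep_law) = (\<integral>\<^sup>+x. f (fst (fst x), snd x, snd (fst x)) \<partial>(PW \<Otimes>\<^sub>M (\<xi> \<Otimes>\<^sub>M \<xi>)) \<Otimes>\<^sub>M rademacher)"
    unfolding indep_law_def by (subst nn_integral_distr) (simp_all add: split_beta')
  also have "\<dots> = (\<integral>\<^sup>+x. \<integral>\<^sup>+r. f (fst x, r, snd x) \<partial>rademacher \<partial>(PW \<Otimes>\<^sub>M (\<xi> \<Otimes>\<^sub>M \<xi>)))"
    using measurable_indep_law_map by (subst R.nn_integral_fst[symmetric]) (simp_all add: split_beta')
  finally show ?thesis
    by (simp add: nn_integral_rademacher)
qed

definition train_density :: "'w \<times> int \<times> 'z \<times> 'z \<Rightarrow> real" where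
  "train_density x = info_density (train_pair x)"

definition mean_density :: "'w \<times> int \<times> 'z \<times> 'z \<Rightarrow> real" where
  "mean_density = (\<lambda>(w, r, a, b). (info_density (w, a) + info_density (w, b)) / 2)"

lemma measurable_train_density [measurable]:
  "train_density \<in> borel_measurable (MW \<Otimes>\<^sub>M (count_space UNIV \<Otimes>\<^sub>M (\<xi> \<Otimes>\<^sub>M \<xi>)))"
  unfolding train_density_def[abs_def] by measurable

lemma measurable_mean_density [measurable]:
  "mean_density \<in> borel_measurable (MW \<Otimes>\<^sub>M (count_space UNIV \<Otimes>\<^sub>M (\<xi> \<Otimes>\<^sub>M \<xi>)))"
  unfolding mean_density_def split_beta' by measurable

lemma train_density_nonneg: "0 \<le> train_density x"
  by (simp add: train_density_def info_density_nonneg)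

lemma train_density_le_mean_density: "train_density x \<le> 2 * mean_density x"
  by (auto simp: train_density_def mean_density_def train_pair_def info_density_nonneg split: prod.split)

lemma mean_density_eq_average:
  "ennreal (mean_density (w, r, z)) = (ennreal (train_density (w, 1, z)) + ennreal (train_density (w, -1, z))) / 2"
  by (cases z) (simp add: mean_density_def train_density_def train_pair_def info_density_nonneg add.commute
      flip: ennreal_plus ennreal_divide_numeral)

lemma nn_integral_L_density:
  assumes [measurable]: "f \<in> borel_measurable (MW \<Otimes>\<^sub>M (count_space UNIV \<Otimes>\<^sub>M (\<xi> \<Otimes>\<^sub>M \<xi>)))"
  shows "(\<integral>\<^sup>+x. f x \<partial>L) = (\<integral>\<^sup>+x. ennreal (train_density x) * f x \<partial>indep_law)"
proof -
  interpret xi_xi: prob_space "\<xi> \<Otimes>\<^sub>M \<xi>" by (intro prob_space_pair prob_space_xi)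
  have [measurable]: "(\<lambda>x. ghost_average \<xi> f (fst x) (snd x)) \<in> borel_measurable (MW \<Otimes>\<^sub>M \<xi>)"
    using measurable_ghost_average[OF xi.sigma_finite_measure_axioms assms] by (simp add: split_beta')
  have "(\<integral>\<^sup>+x. f x \<partial>L) = (\<integral>\<^sup>+x. ennreal (info_density x) * ghost_average \<xi> f (fst x) (snd x) \<partial>(PW \<Otimes>\<^sub>M \<xi>))"
    by (subst nn_integral_L, measurable, subst P_eq_density) (simp add: nn_integral_density split_beta')
  also have "\<dots> = (\<integral>\<^sup>+w. \<integral>\<^sup>+y. ennreal (info_density (w, y)) * ghost_average \<xi> f w y \<partial>\<xi> \<partial>PW)"
    by (rule xi.nn_integral_fst[where f = "\<lambda>x. ennreal (info_density x) * ghost_average \<xi> f (fst x) (snd x)",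
          simplified, symmetric]) measurable
  also have "\<dots> = (\<integral>\<^sup>+w. \<integral>\<^sup>+z. (ennreal (train_density (w, 1, z)) * f (w, 1, z)
      + ennreal (train_density (w, -1, z)) * f (w, -1, z)) / 2 \<partial>(\<xi> \<Otimes>\<^sub>M \<xi>) \<partial>PW)"
  proof (rule nn_integral_cong)
    fix w assume "w \<in> space PW"
    then have w [measurable]: "w \<in> space MW" by simp
    show "(\<integral>\<^sup>+y. ennreal (info_density (w, y)) * ghost_average \<xi> f w y \<partial>\<xi>)
      = (\<integral>\<^sup>+z. (ennreal (train_density (w, 1, z)) * f (w, 1, z)
          + ennreal (train_density (w, -1, z)) * f (w, -1, z)) / 2 \<partial>(\<xi> \<Otimes>\<^sub>M \<xi>))"
      by (subst nn_integral_weighted_ghost_average[OF xi.sigma_finite_measure_axioms _ assms w, symmetric])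
        (simp_all add: train_density_def train_pair_def split_beta', measurable)
  qed
  also have "\<dots> = (\<integral>\<^sup>+x. ennreal (train_density x) * f x \<partial>indep_law)"
    by (subst nn_integral_indep_law, measurable)
      (rule xi_xi.nn_integral_fst[where f = "\<lambda>x. (ennreal (train_density (fst x, 1, snd x)) * f (fst x, 1, snd x)
          + ennreal (train_density (fst x, -1, snd x)) * f (fst x, -1, snd x)) / 2", simplified], measurable)
  finally show ?thesis .
qed

lemma L_eq_density: "L = density indep_law (\<lambda>x. ennreal (train_density x))"
proof (rule measure_eqI)
  fix A assume "A \<in> sets L"
  then have [measurable]: "A \<in> sets (MW \<Otimes>\<^sub>M (count_space UNIV \<Otimes>\<^sub>M (\<xi> \<Otimes>\<^sub>M \<xi>)))"
    by (simp add: sets_L)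
  show "emeasure L A = emeasure (density indep_law (\<lambda>x. ennreal (train_density x))) A"
    using nn_integral_L_density[of "indicator A"] by (simp add: emeasure_density sets_L)
qed (simp add: sets_L sets_indep_law)

definition cond_indep_law :: "('w \<times> int \<times> 'z \<times> 'z) measure" where
  "cond_indep_law = density indep_law (\<lambda>x. ennreal (mean_density x))"

lemma sets_cond_indep_law [measurable_cong]:
  "sets cond_indep_law = sets (MW \<Otimes>\<^sub>M (count_space UNIV \<Otimes>\<^sub>M (\<xi> \<Otimes>\<^sub>M \<xi>)))"
  by (simp add: cond_indep_law_def sets_indep_law)

lemma emeasure_cond_indep_law:
  assumes [measurable]: "A \<in> sets MW" "C \<in> sets (\<xi> \<Otimes>\<^sub>M \<xi>)"
  shows "emeasure cond_indep_law (A \<times> B \<times> C) = emeasure rademacher B * emeasure L (A \<times> UNIV \<times> C)"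
proof -
  have [measurable]: "B \<in> sets (count_space UNIV)" by simp
  define G where "G x = ennreal (mean_density (fst x, 1, snd x)) * indicator (A \<times> UNIV \<times> C) (fst x, 1 :: int, snd x)"
    for x :: "'w \<times> 'z \<times> 'z"
  have [measurable]: "G \<in> borel_measurable (PW \<Otimes>\<^sub>M (\<xi> \<Otimes>\<^sub>M \<xi>))"
    unfolding G_def by measurable
  have "emeasure cond_indep_law (A \<times> B \<times> C) = (\<integral>\<^sup>+x. ennreal (mean_density x) * indicator (A \<times> B \<times> C) x \<partial>indep_law)"
    unfolding cond_indep_law_def by (rule emeasure_density) measurable
  also have "\<dots> = (\<integral>\<^sup>+x. emeasure rademacher B * G x \<partial>(PW \<Otimes>\<^sub>M (\<xi> \<Otimes>\<^sub>M \<xi>)))"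
    by (subst nn_integral_indep_law, measurable)
      (auto intro!: nn_integral_cong simp: G_def mean_density_def indicator_times emeasure_rademacher
        divide_ennreal_def distrib_left distrib_right mult_ac split: prod.split)
  also have "\<dots> = emeasure rademacher B * (\<integral>\<^sup>+x. G x \<partial>(PW \<Otimes>\<^sub>M (\<xi> \<Otimes>\<^sub>M \<xi>)))"
    by (rule nn_integral_cmult) measurable
  also have "(\<integral>\<^sup>+x. G x \<partial>(PW \<Otimes>\<^sub>M (\<xi> \<Otimes>\<^sub>M \<xi>))) = emeasure L (A \<times> UNIV \<times> C)"
  proof -
    have [measurable]: "A \<times> UNIV \<times> C \<in> sets (MW \<Otimes>\<^sub>M (count_space UNIV \<Otimes>\<^sub>M (\<xi> \<Otimes>\<^sub>M \<xi>)))"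
      by (intro pair_measureI) auto
    have "emeasure L (A \<times> UNIV \<times> C) = (\<integral>\<^sup>+x. indicator (A \<times> UNIV \<times> C) x \<partial>L)"
      by (simp add: sets_L)
    also have "\<dots> = (\<integral>\<^sup>+x. ennreal (train_density x) * indicator (A \<times> UNIV \<times> C) x \<partial>indep_law)"
      by (rule nn_integral_L_density) measurable
    also have "\<dots> = (\<integral>\<^sup>+x. G x \<partial>(PW \<Otimes>\<^sub>M (\<xi> \<Otimes>\<^sub>M \<xi>)))"
      by (subst nn_integral_indep_law, measurable)
        (auto intro!: nn_integral_cong simp: G_def mean_density_eq_average indicator_times
          divide_ennreal_def distrib_left distrib_right mult_ac)
    finally show ?thesis ..
  qed
  finally show ?thesis .
qed

lemma prob_space_cond_indep_law: "prob_space cond_indep_law"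
proof (rule prob_spaceI)
  interpret L: prob_space L by (rule prob_space_L)
  have "space cond_indep_law = space MW \<times> UNIV \<times> space (\<xi> \<Otimes>\<^sub>M \<xi>)"
    and space_L: "space L = space MW \<times> UNIV \<times> space (\<xi> \<Otimes>\<^sub>M \<xi>)"
    by (simp_all add: sets_eq_imp_space_eq[OF sets_cond_indep_law] sets_eq_imp_space_eq[OF sets_L]
        space_pair_measure)
  moreover have "emeasure L (space MW \<times> UNIV \<times> space (\<xi> \<Otimes>\<^sub>M \<xi>)) = 1"
    using L.emeasure_space_1 by (simp only: space_L)
  ultimately show "emeasure cond_indep_law (space cond_indep_law) = 1"
    by (simp add: emeasure_cond_indep_law emeasure_rademacher)
qed

lemma L_eq_density_cond_indep_law:
  "L = density cond_indep_law (\<lambda>x. ennreal (train_density x / mean_density x))"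
proof -
  have "density cond_indep_law (\<lambda>x. ennreal (train_density x / mean_density x))
      = density indep_law (\<lambda>x. ennreal (mean_density x) * ennreal (train_density x / mean_density x))"
    unfolding cond_indep_law_def by (rule density_density_eq) measurable
  also have "\<dots> = density indep_law (\<lambda>x. ennreal (train_density x))"
  proof (rule density_cong)
    show "AE x in indep_law. ennreal (mean_density x) * ennreal (train_density x / mean_density x)
        = ennreal (train_density x)"
    proof (rule AE_I2)
      fix x
      show "ennreal (mean_density x) * ennreal (train_density x / mean_density x) = ennreal (train_density x)"
        using train_density_nonneg[of x] train_density_le_mean_density[of x]
        by (cases "mean_density x = 0") (simp_all add: ennreal_mult''[symmetric])
    qed
  qed measurable
  finally show ?thesis
    by (simp add: L_eq_density)
qed

lemma prob_space_indep_law: "prob_space indep_law"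
  unfolding indep_law_def
  by (intro prob_space.prob_space_distr prob_space_pair prob_space_PW prob_space_xi prob_space_rademacher)
    measurable

lemma mean_density_nonneg: "0 \<le> mean_density x"
  using train_density_le_mean_density[of x] train_density_nonneg[of x] by linarith

lemma ln_train_div_mean_le_1: "ln (train_density x / mean_density x) \<le> 1"
proof (cases "train_density x = 0")
  case False
  then have "0 < train_density x / mean_density x" "train_density x / mean_density x \<le> 2"
    using train_density_nonneg[of x] train_density_le_mean_density[of x]
    by (auto simp: divide_le_eq)
  then show ?thesis
    using ln_le_minus_one[of "train_density x / mean_density x"] by linarith
qed simp

lemma mean_density_sign: "mean_density (w, r, z) = mean_density (w, 1, z)"
  by (simp add: mean_density_def split: prod.split)

lemma nn_integral_L_inverse_mean_density: "(\<integral>\<^sup>+x. ennreal (1 / mean_density x) \<partial>L) \<le> 1"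
proof -
  interpret N: prob_space "PW \<Otimes>\<^sub>M (\<xi> \<Otimes>\<^sub>M \<xi>)"
    by (intro prob_space_pair prob_space_PW prob_space_xi)
  have "(\<integral>\<^sup>+x. ennreal (1 / mean_density x) \<partial>L)
      = (\<integral>\<^sup>+x. (ennreal (train_density (fst x, 1, snd x)) * ennreal (1 / mean_density (fst x, 1, snd x))
          + ennreal (train_density (fst x, -1, snd x)) * ennreal (1 / mean_density (fst x, -1, snd x))) / 2
          \<partial>(PW \<Otimes>\<^sub>M (\<xi> \<Otimes>\<^sub>M \<xi>)))"
    by (subst nn_integral_L_density, measurable) (rule nn_integral_indep_law, measurable)
  also have "\<dots> \<le> (\<integral>\<^sup>+x. 1 \<partial>(PW \<Otimes>\<^sub>M (\<xi> \<Otimes>\<^sub>M \<xi>)))"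
  proof (rule nn_integral_mono)
    fix x :: "'w \<times> 'z \<times> 'z"
    obtain w z where x: "x = (w, z)" by (cases x)
    have "(ennreal (train_density (w, 1, z)) * ennreal (1 / mean_density (w, 1, z))
          + ennreal (train_density (w, -1, z)) * ennreal (1 / mean_density (w, -1, z))) / 2
        = (ennreal (train_density (w, 1, z)) + ennreal (train_density (w, -1, z))) / 2
          * ennreal (1 / mean_density (w, 1, z))"
      by (subst mean_density_sign[of w "-1"]) (simp add: divide_ennreal_def distrib_left distrib_right mult_ac)
    also have "\<dots> = ennreal (mean_density (w, 1, z) * (1 / mean_density (w, 1, z)))"
      using mean_density_nonneg[of "(w, 1, z)"]
      by (simp add: mean_density_eq_average[of w 1 z, symmetric] ennreal_mult''[symmetric])
    also have "\<dots> \<le> 1"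
      by (cases "mean_density (w, 1, z) = 0") simp_all
    finally show "(ennreal (train_density (fst x, 1, snd x)) * ennreal (1 / mean_density (fst x, 1, snd x))
          + ennreal (train_density (fst x, -1, snd x)) * ennreal (1 / mean_density (fst x, -1, snd x))) / 2
        \<le> 1"
      by (simp add: x)
  qed
  finally show ?thesis
    by (simp add: N.emeasure_space_1)
qed

lemma KL_div_L_le: "KL_div L cond_indep_law \<le> KL_div P (PW \<Otimes>\<^sub>M \<xi>)"
proof -
  interpret L: prob_space L by (rule prob_space_L)
  interpret indep: prob_space indep_law by (rule prob_space_indep_law)
  have "KL_div L cond_indep_law = ereal_integral L (\<lambda>x. ln (train_density x / mean_density x))"
    using prob_space_imp_sigma_finite[OF prob_space_cond_indep_law] _ _ L_eq_density_cond_indep_law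
    by (rule KL_div_density) (measurable, simp add: train_density_nonneg mean_density_nonneg)
  moreover have "KL_div P (PW \<Otimes>\<^sub>M \<xi>) = ereal_integral L (\<lambda>x. ln (train_density x))"
  proof -
    have "KL_div P (PW \<Otimes>\<^sub>M \<xi>) = ereal_integral P (\<lambda>x. ln (info_density x))"
      using PW_xi.P.sigma_finite_measure_axioms _ info_density_nonneg P_eq_density
      by (rule KL_div_density) measurable
    moreover have "ereal_integral (distr L (MW \<Otimes>\<^sub>M \<xi>) train_pair) (\<lambda>x. ln (info_density x))
        = ereal_integral L (\<lambda>x. ln (train_density x))"
      unfolding train_density_def by (rule ereal_integral_distr) measurable
    ultimately show ?thesis
      by (simp only: distr_L_train_pair)
  qed
  moreover have "AE x in L. 0 < train_density x \<and> 0 < mean_density x"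
  proof -
    have "0 < train_density x \<and> 0 < mean_density x" if "0 < ennreal (train_density x)" for x
      using that train_density_le_mean_density[of x] by simp
    then have "AE x in indep_law. 0 < ennreal (train_density x) \<longrightarrow> 0 < train_density x \<and> 0 < mean_density x"
      by simp
    then show ?thesis
      by (subst L_eq_density) (simp add: AE_density)
  qed
  moreover have "(\<integral>\<^sup>+x. ennreal (ln (train_density x / mean_density x)) \<partial>L) \<noteq> \<infinity>"
  proof -
    have "(\<integral>\<^sup>+x. ennreal (ln (train_density x / mean_density x)) \<partial>L) \<le> (\<integral>\<^sup>+x. 1 \<partial>L)"
      using ln_train_div_mean_le_1 by (intro nn_integral_mono) simp
    then show ?thesis
      by (auto simp: L.emeasure_space_1 top_unique)
  qed
  moreover have "(\<integral>\<^sup>+x. ennreal (- ln (train_density x)) \<partial>L) \<noteq> \<infinity>"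
  proof -
    have "(\<integral>\<^sup>+x. ennreal (- ln (train_density x)) \<partial>L)
        = (\<integral>\<^sup>+x. ennreal (train_density x) * ennreal (- ln (train_density x)) \<partial>indep_law)"
      by (rule nn_integral_L_density) measurable
    also have "\<dots> \<le> (\<integral>\<^sup>+x. 1 \<partial>indep_law)"
      by (intro nn_integral_mono ennreal_mult_neg_ln_le_1 train_density_nonneg)
    finally show ?thesis
      by (auto simp: indep.emeasure_space_1 top_unique)
  qed
  ultimately show ?thesis
    using ereal_integral_ln_div_le[OF prob_space_L, of train_density mean_density]
      nn_integral_L_inverse_mean_density
    by (simp add: measurable_cong_sets[OF sets_L refl])
qed

end

section \<open>The supersample is a ghost coupling\<close>

lemma
  assumes "prob_space \<xi>" and "K \<in> PiM {..<n} (\<lambda>_. \<xi>) \<rightarrow>\<^sub>M prob_algebra MW" and "i < n"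
  shows measurable_supersample_sign:
      "(\<lambda>\<omega>. case fst \<omega> of (zm, zp, r) \<Rightarrow> r i) \<in> supersample n \<xi> MW K \<rightarrow>\<^sub>M count_space UNIV"
    and measurable_supersample_pair:
      "(\<lambda>\<omega>. case fst \<omega> of (zm, zp, r) \<Rightarrow> (zm i, zp i)) \<in> supersample n \<xi> MW K \<rightarrow>\<^sub>M \<xi> \<Otimes>\<^sub>M \<xi>"
proof -
  note [measurable_cong] = sets_supersample[OF assms(1,2), unfolded supersample_base_def]
  have [measurable]: "i \<in> {..<n}" using \<open>i < n\<close> by simp
  have "(\<lambda>\<omega>. snd (snd (fst \<omega>)) i) \<in> supersample n \<xi> MW K \<rightarrow>\<^sub>M rademacher"
    by measurable
  then show "(\<lambda>\<omega>. case fst \<omega> of (zm, zp, r) \<Rightarrow> r i) \<in> supersample n \<xi> MW K \<rightarrow>\<^sub>M count_space UNIV"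
    by (simp add: split_beta' measurable_rademacher)
  show "(\<lambda>\<omega>. case fst \<omega> of (zm, zp, r) \<Rightarrow> (zm i, zp i)) \<in> supersample n \<xi> MW K \<rightarrow>\<^sub>M \<xi> \<Otimes>\<^sub>M \<xi>"
    unfolding split_beta' by measurable
qed

lemma ghost_coupling_supersample:
  fixes \<xi> :: "'z measure" and MW :: "'w measure"
  assumes \<xi>: "prob_space \<xi>" and K [measurable]: "K \<in> PiM {..<n} (\<lambda>_. \<xi>) \<rightarrow>\<^sub>M prob_algebra MW"
    and "i < n"
  shows "ghost_coupling \<xi> MW
    (distr (standard_law n \<xi> MW K) (MW \<Otimes>\<^sub>M \<xi>) (\<lambda>\<omega>. (snd \<omega>, fst \<omega> i)))
    (distr (supersample n \<xi> MW K) (MW \<Otimes>\<^sub>M count_space UNIV \<Otimes>\<^sub>M (\<xi> \<Otimes>\<^sub>M \<xi>))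
      (\<lambda>\<omega>. (snd \<omega>, case fst \<omega> of (zm, zp, r) \<Rightarrow> r i, case fst \<omega> of (zm, zp, r) \<Rightarrow> (zm i, zp i))))"
    (is "ghost_coupling \<xi> MW ?P ?L")
proof (rule ghost_coupling.intro)
  note [measurable_cong] = sets_supersample[OF \<xi> K] sets_standard_law[OF \<xi> K]
    and [measurable] = measurable_supersample_sign[OF assms] measurable_supersample_pair[OF assms]
  have [measurable]: "i \<in> {..<n}" using \<open>i < n\<close> by simp
  show "prob_space ?P"
    by (intro prob_space.prob_space_distr prob_space_standard_law \<xi> K) measurable
  show "distr ?P \<xi> snd = \<xi>"
    by (subst distr_distr) (simp_all add: comp_def distr_standard_law_coord[OF assms])
  fix f :: "'w \<times> int \<times> 'z \<times> 'z \<Rightarrow> ennreal"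
  assume f [measurable]: "f \<in> borel_measurable (MW \<Otimes>\<^sub>M count_space UNIV \<Otimes>\<^sub>M (\<xi> \<Otimes>\<^sub>M \<xi>))"
  have [measurable]: "(\<lambda>x. ghost_average \<xi> f (fst x) (snd x)) \<in> borel_measurable (MW \<Otimes>\<^sub>M \<xi>)"
    using measurable_ghost_average[OF prob_space_imp_sigma_finite[OF \<xi>] f] by (simp add: split_beta')
  have "(\<integral>\<^sup>+x. f x \<partial>?L) = (\<integral>\<^sup>+\<omega>. f (snd \<omega>, case fst \<omega> of (zm, zp, r) \<Rightarrow> r i,
      case fst \<omega> of (zm, zp, r) \<Rightarrow> (zm i, zp i)) \<partial>supersample n \<xi> MW K)"
    by (rule nn_integral_distr) measurable
  also have "\<dots> = (\<integral>\<^sup>+\<omega>. ghost_average \<xi> f (snd \<omega>) (fst \<omega> i) \<partial>standard_law n \<xi> MW K)"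
    by (rule nn_integral_supersample_coord[OF assms f])
  also have "\<dots> = (\<integral>\<^sup>+x. ghost_average \<xi> f (fst x) (snd x) \<partial>?P)"
  proof -
    have "(\<lambda>\<omega>. (snd \<omega>, fst \<omega> i)) \<in> standard_law n \<xi> MW K \<rightarrow>\<^sub>M MW \<Otimes>\<^sub>M \<xi>"
      by measurable
    from nn_integral_distr[OF this, of "\<lambda>x. ghost_average \<xi> f (fst x) (snd x)"] show ?thesis
      by simp
  qed
  finally show "(\<integral>\<^sup>+x. f x \<partial>?L) = (\<integral>\<^sup>+x. ghost_average \<xi> f (fst x) (snd x) \<partial>?P)" .
qed (simp_all add: \<xi>)

context ghost_coupling_ac
begin

lemma cond_product_eq_cond_indep_law:
  assumes "prob_space M" and "X \<in> M \<rightarrow>\<^sub>M MW" "Y \<in> M \<rightarrow>\<^sub>M count_space UNIV" "Z \<in> M \<rightarrow>\<^sub>M \<xi> \<Otimes>\<^sub>M \<xi>"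
    and L_eq: "L = distr M (MW \<Otimes>\<^sub>M count_space UNIV \<Otimes>\<^sub>M (\<xi> \<Otimes>\<^sub>M \<xi>)) (\<lambda>\<omega>. (X \<omega>, Y \<omega>, Z \<omega>))"
  shows "cond_product M MW (count_space UNIV) (\<xi> \<Otimes>\<^sub>M \<xi>) X Y Z = cond_indep_law"
proof (rule cond_product_indep[OF assms(1-4)], fold L_eq)
  interpret xi_xi: prob_space "\<xi> \<Otimes>\<^sub>M \<xi>"
    by (intro prob_space_pair prob_space_xi)
  fix A and B :: "int set" and C assume "A \<in> sets MW" "C \<in> sets (\<xi> \<Otimes>\<^sub>M \<xi>)"
  then show "emeasure cond_indep_law (A \<times> B \<times> C)
      = emeasure L (space MW \<times> B \<times> space (\<xi> \<Otimes>\<^sub>M \<xi>)) * emeasure L (A \<times> space (count_space UNIV) \<times> C)"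
    by (simp add: emeasure_cond_indep_law emeasure_L_space_sign_pair emeasure_rademacher xi_xi.emeasure_space_1)
next
  interpret xi_xi: prob_space "\<xi> \<Otimes>\<^sub>M \<xi>"
    by (intro prob_space_pair prob_space_xi)
  fix B :: "int set" and C assume "C \<in> sets (\<xi> \<Otimes>\<^sub>M \<xi>)"
  then show "emeasure L (space MW \<times> B \<times> C)
      = emeasure L (space MW \<times> B \<times> space (\<xi> \<Otimes>\<^sub>M \<xi>)) * emeasure L (space MW \<times> space (count_space UNIV) \<times> C)"
    by (simp add: emeasure_L_space_sign_pair emeasure_rademacher xi_xi.emeasure_space_1)
qed (simp_all add: sets_cond_indep_law prob_space.emeasure_space_1[OF prob_space_cond_indep_law])

end

theorem lemma3:
  fixes n :: nat and \<xi> :: "'z measure" and MW :: "'w measure"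
    and K :: "(nat \<Rightarrow> 'z) \<Rightarrow> 'w measure" and i :: nat
  assumes "prob_space \<xi>"
    and "K \<in> PiM {..<n} (\<lambda>_. \<xi>) \<rightarrow>\<^sub>M prob_algebra MW"
    and "i < n"
  shows "cond_mutual_info (supersample n \<xi> MW K) MW (count_space UNIV) (\<xi> \<Otimes>\<^sub>M \<xi>)
           (\<lambda>\<omega>. snd \<omega>)
           (\<lambda>\<omega>. case fst \<omega> of (zm, zp, r) \<Rightarrow> r i)
           (\<lambda>\<omega>. case fst \<omega> of (zm, zp, r) \<Rightarrow> (zm i, zp i))
         \<le> mutual_info (standard_law n \<xi> MW K) MW \<xi> (\<lambda>\<omega>. snd \<omega>) (\<lambda>\<omega>. fst \<omega> i)"
proof -
  define P where "P = distr (standard_law n \<xi> MW K) (MW \<Otimes>\<^sub>M \<xi>) (\<lambda>\<omega>. (snd \<omega>, fst \<omega> i))"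
  define L where "L = distr (supersample n \<xi> MW K) (MW \<Otimes>\<^sub>M count_space UNIV \<Otimes>\<^sub>M (\<xi> \<Otimes>\<^sub>M \<xi>))
    (\<lambda>\<omega>. (snd \<omega>, case fst \<omega> of (zm, zp, r) \<Rightarrow> r i, case fst \<omega> of (zm, zp, r) \<Rightarrow> (zm i, zp i)))"
  interpret ghost_coupling \<xi> MW P L
    unfolding P_def L_def by (rule ghost_coupling_supersample[OF assms])
  have mutual_info_eq: "mutual_info (standard_law n \<xi> MW K) MW \<xi> (\<lambda>\<omega>. snd \<omega>) (\<lambda>\<omega>. fst \<omega> i)
      = KL_div P (distr P MW fst \<Otimes>\<^sub>M \<xi>)"
    using sets_standard_law[OF assms(1,2)] \<open>i < n\<close> unfolding mutual_info_def P_def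
    by (simp add: distr_distr comp_def distr_standard_law_coord[OF assms] cong: measurable_cong_sets)
  show ?thesis
  proof (cases "absolutely_continuous (distr P MW fst \<Otimes>\<^sub>M \<xi>) P")
    case True
    interpret ghost_coupling_ac \<xi> MW P L
      by unfold_locales fact
    have "cond_product (supersample n \<xi> MW K) MW (count_space UNIV) (\<xi> \<Otimes>\<^sub>M \<xi>) snd
        (\<lambda>\<omega>. case fst \<omega> of (zm, zp, r) \<Rightarrow> r i) (\<lambda>\<omega>. case fst \<omega> of (zm, zp, r) \<Rightarrow> (zm i, zp i))
      = cond_indep_law"
      using sets_supersample[OF assms(1,2)] L_def
      by (intro cond_product_eq_cond_indep_law prob_space_supersample measurable_supersample_sign
          measurable_supersample_pair assms) (simp_all cong: measurable_cong_sets)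
    then show ?thesis
      using KL_div_L_le by (simp add: cond_mutual_info_def mutual_info_eq flip: L_def)
  next
    case False
    then show ?thesis
      by (simp add: mutual_info_eq KL_div_def)
  qed
qed

end
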